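(* Let $k,m\geqslant1$ and $H_{k,m}(x)=\#\{n\leqslant x:\ H(n)\leqslant k,\ H(n+1)\leqslant m\}$. Then for $x\geqslant2$, $$H_{k,m}(x)=c_{k,m}x+R_{k,m}(x),\qquad c_{k,m}=\prod_p\left(1+\sum_{\nu\geqslant1}\frac{\mathcal{F}_k(p^\nu)+\mathcal{F}_m(p^\nu)}{p^\nu}\right),$$ where $$R_{k,m}(x)\ll\min_{\substack{1\leqslant k_0\leqslant k\\1\leqslant m_0\leqslant m}}\left(\alpha\beta\,\kappa^{\alpha+\beta}x^{\frac1\alpha+\frac1\beta-\frac{1}{\alpha\beta}}(\log x)^2\right),\quad \alpha=2\uparrow\uparrow k_0,\ \beta=2\uparrow\uparrow m_0,$$ with an absolute implied constant, and $\kappa=\exp\left(\sum_p\frac{1}{p\log p}\right)$.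
   Context: $H(n)$ is the height of the factorization tree of $n\geqslant1$: $H(1)=0$ and, for $n=p_1^{\alpha_1}\cdots p_k^{\alpha_k}>1$ with distinct primes $p_i$, $H(n)=1+\max_i H(\alpha_i)$. For $m\geqslant0$, $f_m(n)=1$ if $H(n)\leqslant m$ and $0$ otherwise, and $\mathcal{F}_m$ is defined by $f_m(n)=\sum_{d\mid n}\mathcal{F}_m(d)$ for all $n\geqslant1$. Tetration: $a\uparrow\uparrow0=1$, $a\uparrow\uparrow b=a^{a\uparrow\uparrow(b-1)}$. Products and sums over $p$ run over primes. *)

theory Defs
  imports "HOL-Computational_Algebra.Computational_Algebra" "HOL-Analysis.Analysis"
begin

lemma multiplicity_less_self:
  assumes "prime (p::nat)" "n > 1"
  shows "multiplicity p n < n"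
proof -
  have "multiplicity p n < p ^ multiplicity p n"
    proof -
    have "2 ^ multiplicity p n \<le> p ^ multiplicity p n"
      using assms(1) prime_ge_2_nat power_mono by blast
    then show ?thesis using less_exp[of "multiplicity p n"] by linarith
  qed
  also have "p ^ multiplicity p n \<le> n"
    using assms by (intro dvd_imp_le multiplicity_dvd) auto
  finally show ?thesis .
qed

text \<open>Height of the factorization tree; H(0) is irrelevant (set to 0).\<close>
function H :: "nat \<Rightarrow> nat" where
  "H n = (if n \<le> 1 then 0 else 1 + Max ((\<lambda>p. H (multiplicity p n)) ` prime_factors n))"
  by auto
termination
  by (relation "Wellfounded.measure id") (auto intro: multiplicity_less_self)

declare H.simps[simp del]

definition f :: "nat \<Rightarrow> nat \<Rightarrow> int" where
  "f m n = (if H n \<le> m then 1 else 0)"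

definition F :: "nat \<Rightarrow> nat \<Rightarrow> int" where
  "F m = (THE G. G 0 = 0 \<and> (\<forall>n\<ge>1. f m n = (\<Sum>d | d dvd n. G d)))"

fun tet :: "nat \<Rightarrow> nat \<Rightarrow> nat" where
  "tet a 0 = 1"
| "tet a (Suc b) = a ^ tet a b"

definition Hcount :: "nat \<Rightarrow> nat \<Rightarrow> real \<Rightarrow> nat" where
  "Hcount k m x = card {n::nat. 1 \<le> n \<and> real n \<le> x \<and> H n \<le> k \<and> H (n+1) \<le> m}"

definition c :: "nat \<Rightarrow> nat \<Rightarrow> real" where
  "c k m = lim (\<lambda>N. \<Prod>p\<in>{p. prime p \<and> p \<le> N}.
      (1 + (\<Sum>\<nu>. (real_of_int (F k (p ^ Suc \<nu>)) + real_of_int (F m (p ^ Suc \<nu>))) / real p ^ Suc \<nu>)))"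

definition kappa :: real where
  "kappa = exp (\<Sum>n. if prime n then 1 / (real n * ln (real n)) else 0)"

end

theory Submission
  imports Defs
begin

text \<open>Since \<open>H (p\<^sup>\<nu>) = 1 + H \<nu>\<close>, the indicator \<open>f\<^sub>k\<close> is multiplicative with
  \<open>f\<^sub>k (p\<^sup>\<nu>) = [H \<nu> < k]\<close>, and \<open>H \<nu> < k\<close> for all \<open>\<nu> < 2\<up>\<up>k\<close>. Hence \<open>F\<^sub>k\<close> is multiplicative,
  bounded by 1, and supported on \<open>\<alpha>\<close>-full numbers for every \<open>\<alpha> \<le> 2\<up>\<up>k\<close>. Expanding
  \<open>f\<^sub>k(n) f\<^sub>m(n+1) = \<Sum>\<^bsub>d | n, e | n+1\<^esub> F\<^sub>k(d) F\<^sub>m(e)\<close> and counting the \<open>n \<le> x\<close> with \<open>d | n\<close>,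
  \<open>e | n + 1\<close> (about \<open>x / (d e)\<close> of them if \<open>d\<close>, \<open>e\<close> are coprime, none otherwise) produces the main
  term \<open>x \<Sum>\<^bsub>(d,e)=1\<^esub> F\<^sub>k(d) F\<^sub>m(e) / (d e)\<close>, and this double series is the Euler product
  \<open>c\<^sub>k\<^sub>,\<^sub>m\<close>. For \<open>e \<le> E = x\<^sup>1\<^sup>-\<^sup>1\<^sup>/\<^sup>\<alpha>\<close> the \<open>O(1)\<close> counting errors are summed over \<open>\<alpha>\<close>-full \<open>d \<le> x\<close>
  and \<open>\<beta>\<close>-full \<open>e \<le> E\<close>; for \<open>e > E\<close> the count is bounded by \<open>3 x / e\<close>. Both need only that there
  are at most \<open>\<kappa>\<^sup>t y\<^sup>1\<^sup>/\<^sup>t\<close> \<open>t\<close>-full numbers up to \<open>y\<close>, which follows from Rankin's trick and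
  \<open>\<Prod>\<^sub>p (1 + \<Sum>\<^bsub>r>t\<^esub> p\<^sup>-\<^sup>r\<^sup>/\<^sup>t) \<le> exp (t \<Sum>\<^sub>p 1 / (p log p)) = \<kappa>\<^sup>t\<close>.\<close>

section \<open>The height function\<close>

lemma H_eq_0: "n \<le> 1 \<Longrightarrow> H n = 0"
  by (subst H.simps) simp

lemma prime_factors_nonempty:
  assumes "(n::nat) > 1"
  shows "prime_factors n \<noteq> {}"
proof -
  obtain p where "prime p" "p dvd n" using prime_factor_nat[of n] assms by auto
  then have "p \<in> prime_factors n" using assms by (auto simp: in_prime_factors_iff)
  then show ?thesis by blast
qed

lemma H_le_Suc_iff:
  assumes "n \<ge> 1"
  shows "H n \<le> Suc k \<longleftrightarrow> (\<forall>p\<in>prime_factors n. H (multiplicity p n) \<le> k)"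
proof (cases "n = 1")
  case False
  then have "n > 1" using assms by simp
  then show ?thesis
    using prime_factors_nonempty[of n] by (subst H.simps) (simp add: Max_le_iff)
qed (simp add: H_eq_0)

lemma H_witness:
  assumes "n > 1"
  obtains p where "p \<in> prime_factors n" "H n = Suc (H (multiplicity p n))"
proof -
  let ?A = "(\<lambda>p. H (multiplicity p n)) ` prime_factors n"
  have "Max ?A \<in> ?A" using prime_factors_nonempty[OF assms] by (intro Max_in) auto
  then show ?thesis using that assms by (auto simp: H.simps[of n])
qed

lemma tet_2_le_if_le_H: "v \<ge> 1 \<Longrightarrow> j \<le> H v \<Longrightarrow> tet 2 j \<le> v"
proof (induction j arbitrary: v)
  case (Suc j)
  then have "v > 1" using H_eq_0[of v] by (cases "v = 1") auto
  then obtain p where p: "p \<in> prime_factors v" "H v = Suc (H (multiplicity p v))"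
    by (rule H_witness)
  have "prime p" "multiplicity p v \<ge> 1"
    using p(1) by (auto simp: prime_factors_multiplicity)
  then have "tet 2 j \<le> multiplicity p v" using Suc p(2) by simp
  then have "tet 2 (Suc j) \<le> 2 ^ multiplicity p v" by simp
  also have "\<dots> \<le> p ^ multiplicity p v"
    using \<open>prime p\<close> prime_ge_2_nat power_mono by blast
  also have "\<dots> \<le> v" using \<open>v > 1\<close> by (intro dvd_imp_le multiplicity_dvd) auto
  finally show ?case .
qed simp

lemma tet_2_mono: "a \<le> b \<Longrightarrow> tet 2 a \<le> tet 2 b"
proof (induction b)
  case (Suc b)
  then show ?case
    using less_exp[of "tet 2 b"] by (cases "a = Suc b") (auto intro: order_trans less_imp_le)
qed simp

lemma tet_2_ge_2: "j \<ge> 1 \<Longrightarrow> tet 2 j \<ge> 2"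
  using tet_2_mono[of 1 j] by simp

section \<open>Sums of multiplicative expressions over prescribed exponents\<close>

lemma prime_factors_prod_prime_powers:
  assumes "finite P" "\<forall>p\<in>P. prime p"
  shows "prime_factors (\<Prod>p\<in>P. p ^ v p) \<subseteq> P"
  using assms multiplicity_prod_prime_powers[OF assms(1), of _ v]
  by (auto simp: prime_factors_multiplicity split: if_splits)

lemma multiplicity_prod_prime_powers_mem:
  assumes "finite P" "\<forall>p\<in>P. prime p" "q \<in> P"
  shows "multiplicity q (\<Prod>p\<in>P. p ^ v p) = (v q :: nat)"
  using multiplicity_prod_prime_powers[OF assms(1)] assms(2,3) by auto

lemma prod_prime_powers_pos: "\<forall>p\<in>P. prime p \<Longrightarrow> (\<Prod>p\<in>P. p ^ v p) > (0::nat)"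
  by (cases "finite P") (auto intro!: prod_pos simp: prime_gt_0_nat)

lemma prod_multiplicity_superset:
  assumes "finite P" "\<forall>p\<in>P. prime p" "d > 0" "prime_factors d \<subseteq> P"
  shows "(\<Prod>p\<in>P. p ^ multiplicity p d) = (d::nat)"
proof -
  have "(\<Prod>p\<in>P. p ^ multiplicity p d) = (\<Prod>p\<in>prime_factors d. p ^ multiplicity p d)"
    using assms by (intro prod.mono_neutral_right) (auto simp: prime_factors_multiplicity)
  also have "\<dots> = d" using prime_factorization_nat[OF assms(3)] by simp
  finally show ?thesis .
qed

lemma bij_betw_prime_exponents:
  fixes P :: "nat set"
  assumes P: "finite P" "\<forall>p\<in>P. prime p"
  shows "bij_betw (\<lambda>v. \<Prod>p\<in>P. p ^ v p) (PiE P R)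
           {d. d > 0 \<and> prime_factors d \<subseteq> P \<and> (\<forall>p\<in>P. multiplicity p d \<in> R p)}"
proof (rule bij_betw_byWitness[where f' = "\<lambda>d. restrict (\<lambda>p. multiplicity p d) P"])
  show "\<forall>v\<in>PiE P R. restrict (\<lambda>p. multiplicity p (\<Prod>p\<in>P. p ^ v p)) P = v"
    using multiplicity_prod_prime_powers_mem[OF P]
    by (auto simp: PiE_iff intro!: extensionalityI[where A = P])
  show "(\<lambda>v. \<Prod>p\<in>P. p ^ v p) ` PiE P R
          \<subseteq> {d. d > 0 \<and> prime_factors d \<subseteq> P \<and> (\<forall>p\<in>P. multiplicity p d \<in> R p)}"
    using multiplicity_prod_prime_powers_mem[OF P] prod_prime_powers_pos[OF P(2)]
    by (auto simp: PiE_iff intro: subsetD[OF prime_factors_prod_prime_powers[OF P]])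
qed (use prod_multiplicity_superset[OF P] in \<open>auto cong: prod.cong\<close>)

lemma bij_betw_prime_exponent_pairs:
  fixes P :: "nat set"
  assumes P: "finite P" "\<forall>p\<in>P. prime p"
  shows "bij_betw (\<lambda>v. (\<Prod>p\<in>P. p ^ fst (v p), \<Prod>p\<in>P. p ^ snd (v p))) (PiE P R)
           {(d, e). d > 0 \<and> e > 0 \<and> prime_factors d \<subseteq> P \<and> prime_factors e \<subseteq> P \<and>
              (\<forall>p\<in>P. (multiplicity p d, multiplicity p e) \<in> R p)}"
proof (rule bij_betw_byWitness[where
      f' = "\<lambda>(d, e). restrict (\<lambda>p. (multiplicity p d, multiplicity p e)) P"])
  show "\<forall>v\<in>PiE P R. (\<lambda>(d, e). restrict (\<lambda>p. (multiplicity p d, multiplicity p e)) P)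
          (\<Prod>p\<in>P. p ^ fst (v p), \<Prod>p\<in>P. p ^ snd (v p)) = v"
    using multiplicity_prod_prime_powers_mem[OF P]
    by (auto simp: PiE_iff intro!: extensionalityI[where A = P])
  show "(\<lambda>v. (\<Prod>p\<in>P. p ^ fst (v p), \<Prod>p\<in>P. p ^ snd (v p))) ` PiE P R
          \<subseteq> {(d, e). d > 0 \<and> e > 0 \<and> prime_factors d \<subseteq> P \<and> prime_factors e \<subseteq> P \<and>
              (\<forall>p\<in>P. (multiplicity p d, multiplicity p e) \<in> R p)}"
    using multiplicity_prod_prime_powers_mem[OF P] prod_prime_powers_pos[OF P(2)]
    by (auto simp: PiE_iff intro: subsetD[OF prime_factors_prod_prime_powers[OF P]])
qed (use prod_multiplicity_superset[OF P] in \<open>auto cong: prod.cong\<close>)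

lemma sum_prod_multiplicity_eq_prod_sum:
  fixes P :: "nat set" and \<psi> :: "nat \<Rightarrow> nat \<Rightarrow> 'a::comm_semiring_1"
  assumes P: "finite P" "\<forall>p\<in>P. prime p" and R: "\<forall>p\<in>P. finite (R p)"
  shows "(\<Sum>d | d > 0 \<and> prime_factors d \<subseteq> P \<and> (\<forall>p\<in>P. multiplicity p d \<in> R p).
            \<Prod>p\<in>P. \<psi> p (multiplicity p d)) = (\<Prod>p\<in>P. \<Sum>r\<in>R p. \<psi> p r)"
proof -
  have "(\<Prod>p\<in>P. \<Sum>r\<in>R p. \<psi> p r) = (\<Sum>v\<in>PiE P R. \<Prod>p\<in>P. \<psi> p (v p))"
    using P R by (intro prod_sum_PiE) auto
  also have "\<dots> = (\<Sum>v\<in>PiE P R. \<Prod>p\<in>P. \<psi> p (multiplicity p (\<Prod>p\<in>P. p ^ v p)))"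
    using multiplicity_prod_prime_powers_mem[OF P] by (intro sum.cong prod.cong) auto
  also have "\<dots> = (\<Sum>d | d > 0 \<and> prime_factors d \<subseteq> P \<and> (\<forall>p\<in>P. multiplicity p d \<in> R p).
                      \<Prod>p\<in>P. \<psi> p (multiplicity p d))"
    by (rule sum.reindex_bij_betw[OF bij_betw_prime_exponents[OF P]])
  finally show ?thesis by simp
qed

lemma sum_prod_multiplicity_pairs_eq_prod_sum:
  fixes P :: "nat set" and \<psi> :: "nat \<Rightarrow> nat \<Rightarrow> nat \<Rightarrow> 'a::comm_semiring_1"
  assumes P: "finite P" "\<forall>p\<in>P. prime p" and R: "\<forall>p\<in>P. finite (R p)"
  shows "(\<Sum>(d, e) | d > 0 \<and> e > 0 \<and> prime_factors d \<subseteq> P \<and> prime_factors e \<subseteq> P \<and>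
              (\<forall>p\<in>P. (multiplicity p d, multiplicity p e) \<in> R p).
            \<Prod>p\<in>P. \<psi> p (multiplicity p d) (multiplicity p e))
         = (\<Prod>p\<in>P. \<Sum>(i, j)\<in>R p. \<psi> p i j)"
proof -
  have "(\<Prod>p\<in>P. \<Sum>(i, j)\<in>R p. \<psi> p i j) = (\<Sum>v\<in>PiE P R. \<Prod>p\<in>P. \<psi> p (fst (v p)) (snd (v p)))"
    using P R by (subst prod_sum_PiE) (auto simp: case_prod_unfold)
  also have "\<dots> = (\<Sum>v\<in>PiE P R. (\<lambda>(d, e). \<Prod>p\<in>P. \<psi> p (multiplicity p d) (multiplicity p e))
                      (\<Prod>p\<in>P. p ^ fst (v p), \<Prod>p\<in>P. p ^ snd (v p)))"
    using multiplicity_prod_prime_powers_mem[OF P] by (intro sum.cong) (auto intro!: prod.cong)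
  also have "\<dots> = (\<Sum>(d, e) | d > 0 \<and> e > 0 \<and> prime_factors d \<subseteq> P \<and> prime_factors e \<subseteq> P \<and>
              (\<forall>p\<in>P. (multiplicity p d, multiplicity p e) \<in> R p).
            \<Prod>p\<in>P. \<psi> p (multiplicity p d) (multiplicity p e))"
    by (rule sum.reindex_bij_betw[OF bij_betw_prime_exponent_pairs[OF P]])
  finally show ?thesis by simp
qed

lemma dvd_iff_multiplicities:
  assumes "(n::nat) > 0"
  shows "d dvd n \<longleftrightarrow> d > 0 \<and> prime_factors d \<subseteq> prime_factors n \<and>
      (\<forall>p\<in>prime_factors n. multiplicity p d \<in> {..multiplicity p n})"
proof
  assume "d dvd n"
  then show "d > 0 \<and> prime_factors d \<subseteq> prime_factors n \<and>
      (\<forall>p\<in>prime_factors n. multiplicity p d \<in> {..multiplicity p n})"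
    using assms by (auto simp: in_prime_factors_iff intro: dvd_trans dvd_imp_multiplicity_le Nat.gr0I)
next
  assume d: "d > 0 \<and> prime_factors d \<subseteq> prime_factors n \<and>
      (\<forall>p\<in>prime_factors n. multiplicity p d \<in> {..multiplicity p n})"
  show "d dvd n"
  proof (rule multiplicity_le_imp_dvd)
    fix q :: nat assume "prime q"
    then show "multiplicity q d \<le> multiplicity q n"
      using d by (cases "q \<in> prime_factors n") (auto simp: prime_factors_multiplicity)
  qed (use d in simp)
qed

lemma divisor_sum_prod_multiplicity:
  fixes \<psi> :: "nat \<Rightarrow> nat \<Rightarrow> 'a::comm_semiring_1"
  assumes "(n::nat) > 0"
  shows "(\<Sum>d | d dvd n. \<Prod>p\<in>prime_factors n. \<psi> p (multiplicity p d))
       = (\<Prod>p\<in>prime_factors n. \<Sum>r\<le>multiplicity p n. \<psi> p r)"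
  unfolding dvd_iff_multiplicities[OF assms]
  by (rule sum_prod_multiplicity_eq_prod_sum) auto

lemma divisor_sum_eq_imp_eq:
  fixes g h :: "nat \<Rightarrow> 'a::ab_group_add"
  assumes "g 0 = h 0" "\<And>n. n \<ge> 1 \<Longrightarrow> (\<Sum>d | d dvd n. g d) = (\<Sum>d | d dvd n. h d)"
  shows "g = h"
proof
  fix n show "g n = h n"
  proof (induction n rule: less_induct)
    case (less n)
    show ?case
    proof (cases "n = 0")
      case False
      have fin: "finite {d. d dvd n \<and> d < n}"
        using False by (auto intro: finite_subset[OF _ finite_divisors_nat[of n]])
      have split: "{d. d dvd n} = insert n {d. d dvd n \<and> d < n}"
        using False by (auto dest: dvd_imp_le)
      have "(\<Sum>d | d dvd n \<and> d < n. g d) = (\<Sum>d | d dvd n \<and> d < n. h d)"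
        using less by (intro sum.cong) auto
      then show ?thesis using assms(2)[of n] False fin unfolding split by simp
    qed (use assms(1) in simp)
  qed
qed

section \<open>The multiplicative function \<open>F\<^sub>k\<close>\<close>

text \<open>For \<open>i \<ge> 1\<close>, \<open>f_local k i = f k (p ^ i)\<close> for every prime \<open>p\<close>, because \<open>H (p ^ i) = 1 + H i\<close>.\<close>

definition f_local :: "nat \<Rightarrow> nat \<Rightarrow> int" where
  "f_local k i = (if H i < k then 1 else 0)"

definition F_local :: "nat \<Rightarrow> nat \<Rightarrow> int" where
  "F_local k i = (if i = 0 then 1 else f_local k i - f_local k (i - 1))"

definition full :: "nat \<Rightarrow> nat \<Rightarrow> bool" where
  "full t d \<longleftrightarrow> d > 0 \<and> (\<forall>p\<in>prime_factors d. t \<le> multiplicity p d)"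

lemma full_mono: "full t d \<Longrightarrow> s \<le> t \<Longrightarrow> full s d"
  unfolding full_def by auto

lemma f_local_eq_1:
  assumes "k \<ge> 1" "i < tet 2 k"
  shows "f_local k i = 1"
proof -
  have "\<not> k \<le> H i"
    using tet_2_le_if_le_H[of i k] assms H_eq_0[of 0] by (cases "i = 0") auto
  then show ?thesis by (simp add: f_local_def)
qed

lemma F_local_eq_0: "k \<ge> 1 \<Longrightarrow> 1 \<le> i \<Longrightarrow> i < tet 2 k \<Longrightarrow> F_local k i = 0"
  using f_local_eq_1[of k i] f_local_eq_1[of k "i - 1"] by (simp add: F_local_def)

lemma abs_F_local_le_1: "\<bar>F_local k i\<bar> \<le> 1"
  by (auto simp: F_local_def f_local_def)

lemma sum_F_local: "k \<ge> 1 \<Longrightarrow> (\<Sum>j\<le>a. F_local k j) = f_local k a"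
  by (induction a) (auto simp: F_local_def f_local_def H_eq_0)

lemma f_eq_prod_f_local:
  assumes "n \<ge> 1" "k \<ge> 1"
  shows "f k n = (\<Prod>p\<in>prime_factors n. f_local k (multiplicity p n))"
proof -
  have "H n \<le> k \<longleftrightarrow> (\<forall>p\<in>prime_factors n. H (multiplicity p n) \<le> k - 1)"
    using H_le_Suc_iff[OF assms(1), of "k - 1"] assms(2) by simp
  also have "\<dots> \<longleftrightarrow> (\<forall>p\<in>prime_factors n. H (multiplicity p n) < k)"
    using assms(2) by (intro ball_cong refl) linarith
  finally show ?thesis
    by (auto simp: f_def f_local_def prod_zero intro!: prod.neutral[symmetric])
qed

lemma prod_F_local_superset:
  assumes "finite P" "\<forall>p\<in>P. prime p" "d > 0" "prime_factors d \<subseteq> P"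
  shows "(\<Prod>p\<in>prime_factors d. F_local k (multiplicity p d)) = (\<Prod>p\<in>P. F_local k (multiplicity p d))"
  using assms by (intro prod.mono_neutral_left) (auto simp: prime_factors_multiplicity F_local_def)

lemma f_eq_divisor_sum_prod_F_local:
  assumes "n \<ge> 1" "k \<ge> 1"
  shows "f k n = (\<Sum>d | d dvd n. \<Prod>p\<in>prime_factors d. F_local k (multiplicity p d))"
proof -
  have n: "n > 0" using assms by simp
  have "(\<Sum>d | d dvd n. \<Prod>p\<in>prime_factors d. F_local k (multiplicity p d))
      = (\<Sum>d | d dvd n. \<Prod>p\<in>prime_factors n. F_local k (multiplicity p d))"
    using dvd_iff_multiplicities[OF n] by (intro sum.cong refl prod_F_local_superset) auto
  also have "\<dots> = (\<Prod>p\<in>prime_factors n. \<Sum>r\<le>multiplicity p n. F_local k r)"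
    by (rule divisor_sum_prod_multiplicity[OF n])
  also have "\<dots> = f k n"
    using sum_F_local[OF assms(2)] f_eq_prod_f_local[OF assms] by simp
  finally show ?thesis by simp
qed

lemma F_eq:
  assumes "k \<ge> 1"
  shows "F k = (\<lambda>n. if n = 0 then 0 else \<Prod>p\<in>prime_factors n. F_local k (multiplicity p n))"
  unfolding F_def
proof (rule the_equality)
  let ?G = "\<lambda>n. if n = 0 then 0 else \<Prod>p\<in>prime_factors n. F_local k (multiplicity p n)"
  have "f k n = (\<Sum>d | d dvd n. ?G d)" if "n \<ge> 1" for n
    using f_eq_divisor_sum_prod_F_local[OF that assms] that by (auto intro!: sum.cong)
  then show "?G 0 = 0 \<and> (\<forall>n\<ge>1. f k n = (\<Sum>d | d dvd n. ?G d))" by simp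
  then show "G = ?G" if "G 0 = 0 \<and> (\<forall>n\<ge>1. f k n = (\<Sum>d | d dvd n. G d))" for G
    using that by (intro divisor_sum_eq_imp_eq) auto
qed

lemma f_eq_divisor_sum_F: "n \<ge> 1 \<Longrightarrow> k \<ge> 1 \<Longrightarrow> f k n = (\<Sum>d | d dvd n. F k d)"
  using f_eq_divisor_sum_prod_F_local[of n k] by (auto simp: F_eq intro!: sum.cong)

lemma F_eq_prod_superset:
  assumes "k \<ge> 1" "finite P" "\<forall>p\<in>P. prime p" "d > 0" "prime_factors d \<subseteq> P"
  shows "F k d = (\<Prod>p\<in>P. F_local k (multiplicity p d))"
  using prod_F_local_superset[OF assms(2-)] assms by (simp add: F_eq)

lemma F_prime_power: "k \<ge> 1 \<Longrightarrow> prime p \<Longrightarrow> i \<ge> 1 \<Longrightarrow> F k (p ^ i) = F_local k i"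
  by (simp add: F_eq prime_factorization_prime_power prime_gt_0_nat)

lemma abs_F_le_1:
  assumes "k \<ge> 1"
  shows "\<bar>F k d\<bar> \<le> 1"
proof (cases "d = 0")
  case False
  have "\<bar>\<Prod>p\<in>prime_factors d. F_local k (multiplicity p d)\<bar> \<le> 1"
    unfolding abs_prod by (rule prod_le_1) (auto simp: abs_F_local_le_1)
  then show ?thesis using False assms by (simp add: F_eq)
qed (use assms in \<open>simp add: F_eq\<close>)

lemma full_if_F_nonzero:
  assumes "k \<ge> 1" "F k d \<noteq> 0"
  shows "full (tet 2 k) d"
  unfolding full_def
proof (intro conjI ballI)
  show "d > 0" using assms by (cases "d = 0") (auto simp: F_eq)
  fix p assume p: "p \<in> prime_factors d"
  then have "multiplicity p d \<ge> 1" by (auto simp: prime_factors_multiplicity)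
  then show "tet 2 k \<le> multiplicity p d"
    using assms p F_local_eq_0[OF assms(1)] \<open>d > 0\<close> by (force simp: F_eq intro: prod_zero)
qed

section \<open>The constant \<open>\<kappa>\<close>\<close>

definition kappa_term :: "nat \<Rightarrow> real" where
  "kappa_term n = (if prime n then 1 / (real n * ln (real n)) else 0)"

lemma kappa_term_nonneg: "kappa_term n \<ge> 0"
  unfolding kappa_term_def using prime_gt_1_nat[of n] by auto

lemma prod_primes_dvd:
  assumes "finite S" "\<forall>p\<in>S. prime (p::nat)" "\<forall>p\<in>S. p dvd m"
  shows "(\<Prod>p\<in>S. p) dvd m"
  using assms
proof (induction S rule: finite_induct)
  case (insert p S)
  have "coprime p (\<Prod>q\<in>S. q)"
    using insert by (intro prod_coprime_right primes_coprime) auto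
  then show ?case using insert by (simp add: divides_mult)
qed simp

lemma prod_primes_between_le: "(\<Prod>p | prime p \<and> n < p \<and> p \<le> 2 * n. p) \<le> 4 ^ n"
proof -
  let ?S = "{p. prime p \<and> n < p \<and> p \<le> 2 * n}"
  have "p dvd (2 * n choose n)" if p: "p \<in> ?S" for p
  proof -
    have "p dvd fact n * fact n * (2 * n choose n)"
      using p binomial_fact_lemma[of n "2 * n"] by (simp add: prime_dvd_fact_iff)
    moreover have "\<not> p dvd fact n" using p by (simp add: prime_dvd_fact_iff)
    ultimately show ?thesis using p by (auto simp: prime_dvd_mult_iff)
  qed
  then have "(\<Prod>p\<in>?S. p) dvd (2 * n choose n)" by (intro prod_primes_dvd) auto
  then have "(\<Prod>p\<in>?S. p) \<le> (2 * n choose n)" by (rule dvd_imp_le) (simp add: zero_less_binomial)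
  also have "\<dots> \<le> 2 ^ (2 * n)" by (rule binomial_le_pow2)
  finally show ?thesis by (simp add: power_mult)
qed

lemma card_primes_between_le:
  fixes n :: nat
  assumes "n \<ge> 2"
  shows "real (card {p. prime p \<and> n < p \<and> p \<le> 2 * n}) * ln n \<le> n * ln 4"
proof -
  let ?S = "{p. prime p \<and> n < p \<and> p \<le> 2 * n}"
  have fin: "finite ?S" by (rule finite_subset[of _ "{..2 * n}"]) auto
  have "real (card ?S) * ln n = (\<Sum>p\<in>?S. ln n)" by simp
  also have "\<dots> \<le> (\<Sum>p\<in>?S. ln (real p))" using assms by (intro sum_mono) auto
  also have "\<dots> = ln (\<Prod>p\<in>?S. real p)" using fin by (subst ln_prod) (auto simp: prime_gt_0_nat)
  also have "\<dots> \<le> ln (4 ^ n)"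
    using prod_primes_between_le[of n] fin
    by (subst ln_le_cancel_iff) (auto intro!: prod_pos simp: prime_gt_0_nat simp flip: of_nat_prod)
  also have "\<dots> = n * ln 4" by (simp add: ln_realpow)
  finally show ?thesis .
qed

lemma sum_kappa_term_dyadic_le:
  fixes n :: nat
  assumes "n \<ge> 2"
  shows "(\<Sum>p\<in>{n<..2 * n}. kappa_term p) \<le> ln 4 / (ln n)\<^sup>2"
proof -
  let ?S = "{p. prime p \<and> n < p \<and> p \<le> 2 * n}"
  have ln_n: "ln (real n) > 0" using assms by simp
  have "(\<Sum>p\<in>{n<..2 * n}. kappa_term p) = (\<Sum>p\<in>?S. 1 / (real p * ln (real p)))"
    unfolding kappa_term_def by (rule sum.mono_neutral_cong_right) auto
  also have "\<dots> \<le> (\<Sum>p\<in>?S. 1 / (real n * ln (real n)))"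
    using assms ln_n by (intro sum_mono divide_left_mono mult_mono) auto
  also have "\<dots> = real (card ?S) * ln n / (real n * (ln n)\<^sup>2)"
    using ln_n assms by (simp add: field_simps power2_eq_square)
  also have "\<dots> \<le> real n * ln 4 / (real n * (ln n)\<^sup>2)"
    using card_primes_between_le[OF assms] ln_n assms by (intro divide_right_mono) auto
  also have "\<dots> = ln 4 / (ln n)\<^sup>2" using assms by simp
  finally show ?thesis .
qed

lemma sum_inverse_squares_le:
  assumes "a0 \<ge> 1"
  shows "(\<Sum>a\<in>{a0..N}. 1 / real a ^ 2) \<le> 2 / real a0"
proof (cases "a0 \<le> Suc N")
  case True
  have "1 / real a ^ 2 \<le> 2 / real a - 2 / real (Suc a)" if "a \<ge> 1" for a
  proof -
    have "real a * (real a + 1) \<le> 2 * real a ^ 2"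
      using that by (simp add: power2_eq_square algebra_simps)
    then have "1 / real a ^ 2 \<le> 2 / (real a * (real a + 1))"
      using that by (simp add: divide_simps)
    also have "\<dots> = 2 / real a - 2 / real (Suc a)"
      using that by (simp add: field_simps)
    finally show ?thesis .
  qed
  then have "(\<Sum>a\<in>{a0..N}. 1 / real a ^ 2) \<le> (\<Sum>a\<in>{a0..N}. 2 / real a - 2 / real (Suc a))"
    using assms by (intro sum_mono) auto
  also have "\<dots> = 2 / real a0 - 2 / real (Suc N)"
    using sum_Suc_diff[OF True, of "\<lambda>a. - 2 / real a"] by simp
  also have "\<dots> \<le> 2 / real a0" by simp
  finally show ?thesis .
qed simp

lemma sum_kappa_term_le_dyadic:
  "(\<Sum>n\<le>2 ^ Suc J. kappa_term n) \<le> 1 / (2 * ln 2) + 2 / ln 2 * (\<Sum>j\<in>{1..J}. 1 / real j ^ 2)"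
proof (induction J)
  case 0
  have "{..2::nat} = {0, 1, 2}" by auto
  then show ?case by (simp add: kappa_term_def)
next
  case (Suc J)
  let ?n = "2 ^ Suc J :: nat"
  have split: "{..2 * ?n} = {..?n} \<union> {?n<..2 * ?n}" by auto
  have "(\<Sum>n\<le>2 * ?n. kappa_term n) = (\<Sum>n\<le>?n. kappa_term n) + (\<Sum>n\<in>{?n<..2 * ?n}. kappa_term n)"
    by (subst split, rule sum.union_disjoint) auto
  also have "(\<Sum>n\<in>{?n<..2 * ?n}. kappa_term n) \<le> ln 4 / (ln ?n)\<^sup>2"
    by (rule sum_kappa_term_dyadic_le) (simp add: Suc_le_eq)
  also have "ln 4 / (ln ?n)\<^sup>2 = 2 / ln 2 * (1 / real (Suc J) ^ 2)"
    using ln_realpow[of 2 2] ln_realpow[of 2 "Suc J"]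
    by (simp add: field_simps power2_eq_square del: of_nat_Suc)
  finally show ?case using Suc by (simp add: distrib_left)
qed

lemma summable_kappa_term: "summable kappa_term"
proof (rule summableI_nonneg_bounded)
  fix N
  have "{..<N} \<subseteq> {..2 ^ Suc N}"
  proof
    fix n assume "n \<in> {..<N}"
    then have "n < 2 ^ N" using less_exp[of N] by (simp add: order.strict_trans)
    then show "n \<in> {..2 ^ Suc N}" by simp
  qed
  then have "(\<Sum>n<N. kappa_term n) \<le> (\<Sum>n\<le>2 ^ Suc N. kappa_term n)"
    by (intro sum_mono2) (auto simp: kappa_term_nonneg)
  also have "\<dots> \<le> 1 / (2 * ln 2) + 2 / ln 2 * 2"
    using sum_kappa_term_le_dyadic[of N] sum_inverse_squares_le[of 1 N]
          mult_left_mono[of "\<Sum>j\<in>{1..N}. 1 / real j ^ 2" 2 "2 / ln 2"]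
    by simp
  finally show "(\<Sum>n<N. kappa_term n) \<le> 1 / (2 * ln 2) + 2 / ln 2 * 2" .
qed (rule kappa_term_nonneg)

lemma kappa_eq: "kappa = exp (suminf kappa_term)"
  unfolding kappa_def kappa_term_def by simp

lemma kappa_ge_1: "kappa \<ge> 1"
  unfolding kappa_eq using suminf_nonneg[OF summable_kappa_term kappa_term_nonneg] by simp

lemma kappa_pos: "kappa > 0"
  using kappa_ge_1 by simp

section \<open>Counting \<open>t\<close>-full numbers\<close>

lemma sum_powr_prime_powers_le:
  fixes p t :: nat
  assumes p: "prime p" and t: "t \<ge> 1"
  shows "(\<Sum>r\<in>{t+1..n}. (real p powr (-1/t)) ^ r) \<le> t * kappa_term p"
proof -
  define L where "L = ln (real p)"
  define q where "q = exp (- L / t)"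
  have L: "L > 0" unfolding L_def using prime_gt_1_nat[OF p] by simp
  have q_eq: "real p powr (-1/t) = q" unfolding q_def L_def powr_def using prime_gt_0_nat[OF p] by simp
  have q: "0 < q" "q < 1" unfolding q_def using L t by auto
  have "q ^ t = exp (real t * (- L / t))" unfolding q_def by (subst exp_of_nat_mult) simp
  also have "\<dots> = 1 / real p"
    using t prime_gt_0_nat[OF p] by (simp add: L_def exp_minus inverse_eq_divide)
  finally have q_pow_t: "q ^ t = 1 / real p" .
  \<comment> \<open>\<open>q (L + t) \<le> t\<close> is \<open>exp (L / t) \<ge> 1 + L / t\<close>.\<close>
  have "q * (1 + L / t) \<le> q * exp (L / t)"
    using q by (intro mult_left_mono exp_ge_add_one_self) auto
  also have "q * exp (L / t) = 1" unfolding q_def by (simp add: exp_minus field_simps)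
  finally have key: "q * (L + t) \<le> t" using t by (simp add: field_simps)
  have "(1 - q) * (\<Sum>r\<in>{t+1..n}. q ^ r) \<le> q ^ (t + 1)"
    using q by (cases "t + 1 \<le> n") (simp_all add: sum_gp_multiplied)
  then have "(\<Sum>r\<in>{t+1..n}. q ^ r) \<le> q ^ (t + 1) / (1 - q)"
    using q by (simp add: field_simps)
  also have "\<dots> = (1 / real p) * (q / (1 - q))" using q_pow_t by (simp add: field_simps)
  also have "\<dots> \<le> (1 / real p) * (t / L)"
    using key q L by (intro mult_left_mono) (auto simp: field_simps)
  also have "\<dots> = t * kappa_term p" unfolding kappa_term_def L_def using p by simp
  finally show ?thesis by (simp only: q_eq)
qed

lemma powr_eq_prod_multiplicity:
  assumes "finite P" "\<forall>p\<in>P. prime p" "d > 0" "prime_factors d \<subseteq> P"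
  shows "real d powr s = (\<Prod>p\<in>P. (real p powr s) ^ multiplicity p d)"
proof -
  have d: "(\<Prod>p\<in>P. real p ^ multiplicity p d) = real d"
    using arg_cong[OF prod_multiplicity_superset[OF assms], of real] by simp
  have "real d powr s = (\<Prod>p\<in>P. (real p ^ multiplicity p d) powr s)"
    unfolding d[symmetric] by (rule prod_powr_distrib)
  also have "\<dots> = (\<Prod>p\<in>P. (real p powr s) ^ multiplicity p d)"
  proof (rule prod.cong[OF refl])
    fix p assume "p \<in> P"
    then have p: "real p > 0" using assms(2) prime_gt_0_nat by auto
    have "(real p ^ multiplicity p d) powr s = (real p powr real (multiplicity p d)) powr s"
      using p by (simp add: powr_realpow)
    also have "\<dots> = (real p powr s) ^ multiplicity p d"
      using p by (simp add: powr_powr powr_power mult.commute)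
    finally show "(real p ^ multiplicity p d) powr s = (real p powr s) ^ multiplicity p d" .
  qed
  finally show ?thesis .
qed

lemma full_subset_bounded_exponents:
  "{b. b \<le> Y \<and> full (t + 1) b} \<subseteq> {d. d > 0 \<and> prime_factors d \<subseteq> {p. prime p \<and> p \<le> Y} \<and>
      (\<forall>p\<in>{p. prime p \<and> p \<le> Y}. multiplicity p d \<in> insert 0 {t+1..Y})}"
proof
  fix b assume b: "b \<in> {b. b \<le> Y \<and> full (t + 1) b}"
  then have "b > 0" by (simp add: full_def)
  have "multiplicity p b \<le> Y" if "prime p" for p
    using multiplicity_less_self[OF that, of b] b \<open>b > 0\<close> by (cases "b = 1") auto
  moreover have "prime_factors b \<subseteq> {p. prime p \<and> p \<le> Y}"
    using b \<open>b > 0\<close> by (auto simp: in_prime_factors_iff dest!: dvd_imp_le)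
  ultimately show "b \<in> {d. d > 0 \<and> prime_factors d \<subseteq> {p. prime p \<and> p \<le> Y} \<and>
      (\<forall>p\<in>{p. prime p \<and> p \<le> Y}. multiplicity p d \<in> insert 0 {t+1..Y})}"
    using b \<open>b > 0\<close> by (auto simp: full_def prime_factors_multiplicity)
qed

text \<open>Rankin's trick: the sum is at most the Euler product \<open>\<Prod>\<^sub>p (1 + \<Sum>\<^bsub>r>t\<^esub> p\<^sup>-\<^sup>r\<^sup>/\<^sup>t)\<close>,
  whose factors are at most \<open>exp (t / (p log p))\<close>.\<close>

lemma sum_full_powr_le_kappa_power:
  assumes t: "t \<ge> 1"
  shows "(\<Sum>b | b \<le> Y \<and> full (t + 1) b. real b powr (-1/t)) \<le> kappa ^ t"
proof -
  define P where "P = {p. prime p \<and> p \<le> Y}"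
  have P: "finite P" "\<forall>p\<in>P. prime p" unfolding P_def by auto
  define R where "R = (\<lambda>p::nat. insert 0 {t+1..Y})"
  define D where "D = {d. d > 0 \<and> prime_factors d \<subseteq> P \<and> (\<forall>p\<in>P. multiplicity p d \<in> R p)}"
  define \<psi> where "\<psi> = (\<lambda>p r. (real p powr (-1/t)) ^ r)"
  have "finite D"
    using bij_betw_finite[OF bij_betw_prime_exponents[OF P, of R]] unfolding D_def
    by (simp add: R_def finite_PiE P)
  moreover have "{b. b \<le> Y \<and> full (t + 1) b} \<subseteq> D"
    using full_subset_bounded_exponents unfolding D_def P_def R_def .
  ultimately have "(\<Sum>b | b \<le> Y \<and> full (t + 1) b. real b powr (-1/t)) \<le> (\<Sum>b\<in>D. real b powr (-1/t))"
    by (intro sum_mono2) auto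
  also have "\<dots> = (\<Sum>b\<in>D. \<Prod>p\<in>P. \<psi> p (multiplicity p b))"
    unfolding \<psi>_def using P by (intro sum.cong refl powr_eq_prod_multiplicity) (auto simp: D_def)
  also have "\<dots> = (\<Prod>p\<in>P. \<Sum>r\<in>R p. \<psi> p r)"
    unfolding D_def by (rule sum_prod_multiplicity_eq_prod_sum[OF P]) (simp add: R_def)
  also have "\<dots> \<le> (\<Prod>p\<in>P. exp (t * kappa_term p))"
  proof (rule prod_mono)
    fix p assume "p \<in> P"
    then have "(\<Sum>r\<in>R p. \<psi> p r) = 1 + (\<Sum>r\<in>{t+1..Y}. \<psi> p r)"
      unfolding R_def by (subst sum.insert) (auto simp: \<psi>_def)
    also have "\<dots> \<le> 1 + t * kappa_term p"
      using sum_powr_prime_powers_le[of p t Y] \<open>p \<in> P\<close> P t unfolding \<psi>_def by simp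
    also have "\<dots> \<le> exp (t * kappa_term p)" by (rule exp_ge_add_one_self)
    finally show "0 \<le> (\<Sum>r\<in>R p. \<psi> p r) \<and> (\<Sum>r\<in>R p. \<psi> p r) \<le> exp (t * kappa_term p)"
      unfolding \<psi>_def by (auto intro: sum_nonneg)
  qed
  also have "\<dots> = exp (t * (\<Sum>p\<in>P. kappa_term p))"
    using P by (simp add: exp_sum sum_distrib_left)
  also have "\<dots> \<le> exp (t * suminf kappa_term)"
    using sum_le_suminf[OF summable_kappa_term P(1)] kappa_term_nonneg
    by (intro exp_mono mult_left_mono) auto
  also have "\<dots> = kappa ^ t" unfolding kappa_eq by (simp add: exp_of_nat_mult[symmetric])
  finally show ?thesis .
qed

lemma exponent_decompose:
  assumes "t \<ge> 1" "t \<le> e"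
  obtains q r :: nat where "e = t * q + r" "r = 0 \<or> t < r"
proof (cases "t dvd e")
  case True
  then show ?thesis using that[of "e div t" 0] by simp
next
  case False
  then have pos: "e mod t > 0" using assms by (simp add: dvd_eq_mod_eq_0)
  have "e div t \<ge> 1" using assms div_le_mono[of t e t] by simp
  then have "t * (e div t) = t * (e div t - 1) + t" by (cases "e div t") auto
  then have "e = t * (e div t - 1) + (e mod t + t)"
    using div_mult_mod_eq[of e t] by (simp add: mult.commute)
  with pos show ?thesis using that by simp
qed

lemma full_decompose:
  assumes t: "t \<ge> 1" and d: "full t d"
  obtains a b where "a \<ge> 1" "full (t + 1) b" "d = a ^ t * b"
proof -
  define P where "P = prime_factors d"
  have P: "finite P" "\<forall>p\<in>P. prime p" unfolding P_def by auto
  have "\<forall>p\<in>P. \<exists>q r. multiplicity p d = t * q + r \<and> (r = 0 \<or> t < r)"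
    using d t exponent_decompose unfolding full_def P_def by metis
  then obtain q r where qr: "\<And>p. p \<in> P \<Longrightarrow> multiplicity p d = t * q p + r p \<and> (r p = 0 \<or> t < r p)"
    by metis
  define a where "a = (\<Prod>p\<in>P. p ^ q p)"
  define b where "b = (\<Prod>p\<in>P. p ^ r p)"
  have "d = (\<Prod>p\<in>P. p ^ multiplicity p d)"
    using d by (simp add: P_def full_def prime_factorization_nat[symmetric])
  also have "\<dots> = (\<Prod>p\<in>P. (p ^ q p) ^ t * p ^ r p)"
    using qr by (intro prod.cong refl) (simp add: power_add power_mult[symmetric] mult.commute)
  also have "\<dots> = a ^ t * b" by (simp add: a_def b_def prod.distrib prod_power_distrib)
  finally have "d = a ^ t * b" .
  moreover have "a \<ge> 1" using prod_prime_powers_pos[OF P(2)] by (simp add: a_def Suc_le_eq)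
  moreover have "full (t + 1) b"
    unfolding full_def
  proof (intro conjI ballI)
    show "b > 0" using prod_prime_powers_pos[OF P(2)] by (simp add: b_def)
    fix p assume p: "p \<in> prime_factors b"
    then have "p \<in> P" using prime_factors_prod_prime_powers[OF P] by (auto simp: b_def)
    then have "multiplicity p b = r p"
      using multiplicity_prod_prime_powers_mem[OF P] by (simp add: b_def)
    with p qr[OF \<open>p \<in> P\<close>] show "t + 1 \<le> multiplicity p b"
      by (auto simp: prime_factors_multiplicity)
  qed
  ultimately show ?thesis using that by blast
qed

lemma sum_full_le_sum_decomposed:
  fixes w :: "nat \<Rightarrow> real"
  assumes t: "t \<ge> 1" and S: "finite S" "\<forall>d\<in>S. full t d \<and> d \<le> Y" and w: "\<forall>d\<in>S. w d \<ge> 0"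
  shows "(\<Sum>d\<in>S. w d)
           \<le> (\<Sum>b | b \<le> Y \<and> full (t + 1) b. \<Sum>a\<in>{1..Y}. if a ^ t * b \<in> S then w (a ^ t * b) else 0)"
proof -
  define B where "B = {b. b \<le> Y \<and> full (t + 1) b}"
  define g where "g = (\<lambda>(a, b). if a ^ t * b \<in> S then w (a ^ t * b) else 0)"
  have "\<forall>d\<in>S. \<exists>ab. fst ab \<ge> 1 \<and> full (t + 1) (snd ab) \<and> d = fst ab ^ t * snd ab"
    using S(2) full_decompose[OF t] by (metis fst_conv snd_conv)
  then obtain \<phi> where \<phi>: "\<And>d. d \<in> S \<Longrightarrow>
      fst (\<phi> d) \<ge> 1 \<and> full (t + 1) (snd (\<phi> d)) \<and> d = fst (\<phi> d) ^ t * snd (\<phi> d)"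
    by metis
  have "\<phi> d \<in> {1..Y} \<times> B" if "d \<in> S" for d
  proof -
    obtain a b where ab: "\<phi> d = (a, b)" by fastforce
    then have a: "a \<ge> 1" and b: "full (t + 1) b" and d: "d = a ^ t * b" "d \<le> Y"
      using \<phi> S(2) that by (metis fst_conv snd_conv)+
    have "a \<le> a ^ t" using a t by (simp add: self_le_power)
    also have "\<dots> \<le> d" using b d(1) by (simp add: full_def)
    finally have "a \<le> Y" using d(2) by simp
    moreover have "b \<le> d" using mult_le_mono1[of 1 "a ^ t" b] a d(1) by simp
    ultimately show ?thesis using a b d(2) ab by (auto simp: B_def)
  qed
  then have sub: "\<phi> ` S \<subseteq> {1..Y} \<times> B" by blast
  have inj: "inj_on \<phi> S" by (rule inj_onI) (metis \<phi>)
  have fin: "finite B" unfolding B_def by (rule finite_subset[of _ "{..Y}"]) auto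
  have "(\<Sum>d\<in>S. w d) = (\<Sum>d\<in>S. g (\<phi> d))"
    using \<phi> by (intro sum.cong) (auto simp: g_def case_prod_unfold)
  also have "\<dots> = (\<Sum>ab\<in>\<phi> ` S. g ab)" by (simp add: sum.reindex[OF inj])
  also have "\<dots> \<le> (\<Sum>ab\<in>{1..Y} \<times> B. g ab)"
    using sub fin w by (intro sum_mono2) (auto simp: g_def)
  also have "\<dots> = (\<Sum>a\<in>{1..Y}. \<Sum>b\<in>B. g (a, b))"
    by (subst sum.cartesian_product) (simp add: case_prod_eta)
  also have "\<dots> = (\<Sum>b\<in>B. \<Sum>a\<in>{1..Y}. g (a, b))" by (rule sum.swap)
  finally show ?thesis by (simp add: B_def g_def)
qed

lemma sum_inverse_powers_le:
  assumes a0: "a0 \<ge> 1" and t: "t \<ge> 2"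
  shows "(\<Sum>a\<in>{a0..N}. 1 / real a ^ t) \<le> 2 / real a0 ^ (t - 1)"
proof -
  have "1 / real a ^ t \<le> 1 / real a0 ^ (t - 2) * (1 / real a ^ 2)" if "a \<in> {a0..N}" for a
  proof -
    have "real a0 ^ (t - 2) * real a ^ 2 \<le> real a ^ (t - 2) * real a ^ 2"
      using that by (intro mult_right_mono power_mono) auto
    also have "\<dots> = real a ^ t" using t by (metis le_add_diff_inverse2 power_add)
    finally show ?thesis using that a0 by (simp add: divide_simps)
  qed
  then have "(\<Sum>a\<in>{a0..N}. 1 / real a ^ t) \<le> (\<Sum>a\<in>{a0..N}. 1 / real a0 ^ (t - 2) * (1 / real a ^ 2))"
    by (rule sum_mono)
  also have "\<dots> = 1 / real a0 ^ (t - 2) * (\<Sum>a\<in>{a0..N}. 1 / real a ^ 2)"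
    by (rule sum_distrib_left[symmetric])
  also have "\<dots> \<le> 1 / real a0 ^ (t - 2) * (2 / real a0)"
    using sum_inverse_squares_le[OF a0] by (intro mult_left_mono) auto
  also have "\<dots> = 2 / real a0 ^ (t - 1)"
  proof -
    have "t - 1 = Suc (t - 2)" using t by simp
    then show ?thesis by (simp only: power_Suc2) simp
  qed
  finally show ?thesis .
qed

lemma sum_inverse_powers_gt_le:
  assumes t: "t \<ge> 2" and z: "z > 0"
  shows "(\<Sum>a\<in>{a \<in> {1..N}. z < real a}. 1 / real a ^ t) \<le> 2 / z ^ (t - 1)"
proof -
  define a0 where "a0 = nat \<lfloor>z\<rfloor> + 1"
  have a0: "a0 \<ge> 1" "z \<le> real a0" unfolding a0_def using z by linarith+
  have "{a \<in> {1..N}. z < real a} \<subseteq> {a0..N}"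
    using z by (auto simp: a0_def Suc_le_eq nat_less_iff floor_less_iff)
  then have "(\<Sum>a\<in>{a \<in> {1..N}. z < real a}. 1 / real a ^ t) \<le> (\<Sum>a\<in>{a0..N}. 1 / real a ^ t)"
    by (intro sum_mono2) auto
  also have "\<dots> \<le> 2 / real a0 ^ (t - 1)" by (rule sum_inverse_powers_le[OF a0(1) t])
  also have "\<dots> \<le> 2 / z ^ (t - 1)"
    using a0 z by (intro divide_left_mono power_mono mult_pos_pos zero_less_power) auto
  finally show ?thesis .
qed

lemma card_powers_le:
  assumes "t \<ge> 1" "z \<ge> 0"
  shows "real (card {a \<in> {1..N}. real a ^ t \<le> z}) \<le> z powr (1 / t)"
proof -
  have "real a \<le> z powr (1 / t)" if "real a ^ t \<le> z" "a \<ge> 1" for a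
  proof -
    have "real a = (real a ^ t) powr (1 / t)"
      using that assms by (simp add: powr_realpow[symmetric] powr_powr)
    also have "\<dots> \<le> z powr (1 / t)" using that assms by (intro powr_mono2) auto
    finally show ?thesis .
  qed
  then have "{a \<in> {1..N}. real a ^ t \<le> z} \<subseteq> {1..nat \<lfloor>z powr (1 / t)\<rfloor>}"
    by (auto simp: le_nat_iff le_floor_iff)
  then have "card {a \<in> {1..N}. real a ^ t \<le> z} \<le> nat \<lfloor>z powr (1 / t)\<rfloor>"
    using card_mono[of "{1..nat \<lfloor>z powr (1 / t)\<rfloor>}"] by simp
  then have "real (card {a \<in> {1..N}. real a ^ t \<le> z}) \<le> real (nat \<lfloor>z powr (1 / t)\<rfloor>)"
    by (rule of_nat_mono)
  also have "\<dots> \<le> z powr (1 / t)" by (rule of_nat_floor) simp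
  finally show ?thesis .
qed

lemma card_full_le:
  assumes t: "t \<ge> 1" and y: "y > 0"
  shows "real (card {d. real d \<le> y \<and> full t d}) \<le> kappa ^ t * y powr (1 / t)"
proof -
  define Y where "Y = nat \<lfloor>y\<rfloor>"
  define S where "S = {d. real d \<le> y \<and> full t d}"
  have SY: "\<forall>d\<in>S. full t d \<and> d \<le> Y" unfolding S_def Y_def using le_nat_floor by auto
  have fin: "finite S" using SY by (intro finite_subset[of S "{..Y}"]) auto
  have "real (card S) = (\<Sum>d\<in>S. 1)" by simp
  also have "\<dots> \<le> (\<Sum>b | b \<le> Y \<and> full (t + 1) b. \<Sum>a\<in>{1..Y}. if a ^ t * b \<in> S then 1 else 0)"
    using sum_full_le_sum_decomposed[OF t fin SY, of "\<lambda>_. 1"] by simp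
  also have "\<dots> \<le> (\<Sum>b | b \<le> Y \<and> full (t + 1) b. y powr (1 / t) * real b powr (-1/t))"
  proof (rule sum_mono)
    fix b assume "b \<in> {b. b \<le> Y \<and> full (t + 1) b}"
    then have b: "real b > 0" by (simp add: full_def)
    have "(\<Sum>a\<in>{1..Y}. if a ^ t * b \<in> S then 1 else 0) = real (card {a \<in> {1..Y}. a ^ t * b \<in> S})"
      by (simp add: sum.inter_filter[symmetric])
    also have "\<dots> \<le> real (card {a \<in> {1..Y}. real a ^ t \<le> y / b})"
      using b by (intro of_nat_mono card_mono) (auto simp: S_def field_simps)
    also have "\<dots> \<le> (y / b) powr (1 / t)" using t y b by (intro card_powers_le) auto
    also have "\<dots> = y powr (1 / t) * real b powr (-1/t)"
      using y b by (simp add: powr_divide powr_minus_divide)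
    finally show "(\<Sum>a\<in>{1..Y}. if a ^ t * b \<in> S then 1 else 0) \<le> y powr (1 / t) * real b powr (-1/t)" .
  qed
  also have "\<dots> = y powr (1 / t) * (\<Sum>b | b \<le> Y \<and> full (t + 1) b. real b powr (-1/t))"
    by (simp add: sum_distrib_left)
  also have "\<dots> \<le> y powr (1 / t) * kappa ^ t"
    by (intro mult_left_mono sum_full_powr_le_kappa_power t) simp
  finally show ?thesis unfolding S_def by (simp add: mult.commute)
qed

lemma inverse_mult_root_power_eq:
  fixes y b :: real
  assumes "y > 0" "b > 0" "t \<ge> 1"
  shows "1 / (b * ((y / b) powr (1 / t)) ^ (t - 1)) = y powr (1/t - 1) * b powr (-1/t)"
proof -
  define A where "A = y powr (1 / t)"
  define B where "B = b powr (1 / t)"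
  have pos: "A > 0" "B > 0" using assms by (simp_all add: A_def B_def)
  have "A ^ t = y" "B ^ t = b" using assms by (simp_all add: A_def B_def powr_power powr_powr)
  then have "A * A ^ (t - 1) = y" "B * B ^ (t - 1) = b"
    using assms by (simp_all add: power_Suc[symmetric] Suc_diff_le del: power_Suc)
  then have pow: "A ^ (t - 1) = y / A" "B ^ (t - 1) = b / B"
    using pos by (simp_all add: eq_divide_eq mult.commute)
  have quot: "(y / b) powr (1 / t) = A / B" by (simp add: A_def B_def powr_divide)
  have y: "y powr (1/t - 1) = A / y" using assms by (simp add: A_def powr_diff)
  have b: "b powr (-1/t) = 1 / B" by (simp add: B_def powr_minus_divide[symmetric])
  have "1 / (b * ((y / b) powr (1 / t)) ^ (t - 1)) = 1 / (b * ((y / A) / (b / B)))"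
    by (simp only: quot power_divide pow)
  also have "\<dots> = A / y * (1 / B)" using pos assms by (simp add: field_simps)
  finally show ?thesis by (simp only: y b)
qed

lemma sum_inverse_decomposed_gt_le:
  fixes b :: nat and y :: real
  assumes t: "t \<ge> 2" and y: "y > 0" and b: "b > 0"
  shows "(\<Sum>a\<in>{1..Y}. if y < real (a ^ t * b) then 1 / real (a ^ t * b) else 0)
           \<le> 2 * y powr (1/t - 1) * real b powr (-1/t)"
proof -
  have t1: "t \<ge> 1" using t by simp
  define z where "z = (y / b) powr (1 / t)"
  have z: "z > 0" using y b by (simp add: z_def)
  have "z < real a" if "y < real a ^ t * real b" for a
  proof (rule ccontr)
    assume "\<not> z < real a"
    then have "real a ^ t \<le> z ^ t" by (intro power_mono) auto
    also have "z ^ t = y / b" using t1 y b by (simp add: z_def powr_power)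
    finally show False using that b by (simp add: field_simps)
  qed
  then have "(\<Sum>a\<in>{1..Y}. if y < real (a ^ t * b) then 1 / real (a ^ t * b) else 0)
      \<le> (\<Sum>a\<in>{1..Y}. if z < real a then 1 / real b * (1 / real a ^ t) else 0)"
    by (intro sum_mono) (auto simp: mult.commute)
  also have "\<dots> = 1 / real b * (\<Sum>a\<in>{a \<in> {1..Y}. z < real a}. 1 / real a ^ t)"
    by (simp add: sum.inter_filter[symmetric] sum_distrib_left)
  also have "\<dots> \<le> 1 / real b * (2 / z ^ (t - 1))"
    using b by (intro mult_left_mono sum_inverse_powers_gt_le t z) auto
  also have "\<dots> = 2 * y powr (1/t - 1) * real b powr (-1/t)"
    using inverse_mult_root_power_eq[OF y _ t1, of b] b by (simp add: z_def)
  finally show ?thesis .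
qed

lemma sum_inverse_full_gt_le:
  assumes t: "t \<ge> 2" and y: "y > 0"
  shows "(\<Sum>d | y < real d \<and> d \<le> Y \<and> full t d. 1 / real d) \<le> 2 * kappa ^ t * y powr (1/t - 1)"
proof -
  have t1: "t \<ge> 1" using t by simp
  define S where "S = {d. y < real d \<and> d \<le> Y \<and> full t d}"
  have SY: "\<forall>d\<in>S. full t d \<and> d \<le> Y" unfolding S_def by auto
  have fin: "finite S" using SY by (intro finite_subset[of S "{..Y}"]) auto
  have "(\<Sum>d\<in>S. 1 / real d)
      \<le> (\<Sum>b | b \<le> Y \<and> full (t + 1) b. \<Sum>a\<in>{1..Y}. if a ^ t * b \<in> S then 1 / real (a ^ t * b) else 0)"
    using sum_full_le_sum_decomposed[OF t1 fin SY, of "\<lambda>d. 1 / real d"] by simp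
  also have "\<dots> \<le> (\<Sum>b | b \<le> Y \<and> full (t + 1) b.
                   \<Sum>a\<in>{1..Y}. if y < real (a ^ t * b) then 1 / real (a ^ t * b) else 0)"
    by (intro sum_mono) (auto simp: S_def)
  also have "\<dots> \<le> (\<Sum>b | b \<le> Y \<and> full (t + 1) b. 2 * y powr (1/t - 1) * real b powr (-1/t))"
    using t y by (intro sum_mono sum_inverse_decomposed_gt_le) (auto simp: full_def)
  also have "\<dots> = 2 * y powr (1/t - 1) * (\<Sum>b | b \<le> Y \<and> full (t + 1) b. real b powr (-1/t))"
    by (simp add: sum_distrib_left)
  also have "\<dots> \<le> 2 * y powr (1/t - 1) * kappa ^ t"
    by (intro mult_left_mono sum_full_powr_le_kappa_power t1) simp
  finally show ?thesis unfolding S_def by (simp add: mult_ac)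
qed

lemma sum_inverse_full_le:
  assumes "t \<ge> 2"
  shows "(\<Sum>d | d \<le> Y \<and> full t d. 1 / real d) \<le> 1 + 2 * kappa ^ t"
proof -
  let ?S = "{d. 1 < real d \<and> d \<le> Y \<and> full t d}"
  have fin: "finite ?S" by (rule finite_subset[of _ "{..Y}"]) auto
  have "{d. d \<le> Y \<and> full t d} \<subseteq> insert 1 ?S" by (auto simp: full_def)
  then have "(\<Sum>d | d \<le> Y \<and> full t d. 1 / real d) \<le> (\<Sum>d\<in>insert 1 ?S. 1 / real d)"
    using fin by (intro sum_mono2) auto
  also have "\<dots> = 1 + (\<Sum>d\<in>?S. 1 / real d)" using fin by simp
  also have "\<dots> \<le> 1 + 2 * kappa ^ t"
    using sum_inverse_full_gt_le[OF assms, of 1 Y] by simp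
  finally show ?thesis .
qed

section \<open>Integers \<open>n\<close> with \<open>d | n\<close> and \<open>e | n + 1\<close>\<close>

lemma real_div_bounds:
  fixes m n :: nat
  shows "real m / real n - 1 < real (m div n)" "real (m div n) \<le> real m / real n"
proof -
  have "real (m div n) = real_of_int \<lfloor>real m / real n\<rfloor>"
    by (simp only: floor_divide_of_nat_eq of_int_of_nat_eq)
  then show "real m / real n - 1 < real (m div n)" "real (m div n) \<le> real m / real n"
    using real_of_int_floor_add_one_gt[of "real m / real n"] of_int_floor_le[of "real m / real n"]
    by linarith+
qed

lemma card_dvd_add:
  fixes q s N :: nat
  assumes q: "q > 0"
  shows "card {j \<in> {1..N}. q dvd j + s} = (N + s) div q - s div q"
proof -
  have "bij_betw (\<lambda>j. (j + s) div q) {j \<in> {1..N}. q dvd j + s} {s div q <.. (N + s) div q}"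
  proof (rule bij_betw_byWitness[where f' = "\<lambda>i. i * q - s"])
    show "\<forall>j\<in>{j \<in> {1..N}. q dvd j + s}. (j + s) div q * q - s = j" by auto
    show "\<forall>i\<in>{s div q <.. (N + s) div q}. (i * q - s + s) div q = i"
      using q by (auto simp: div_less_iff_less_mult)
    show "(\<lambda>j. (j + s) div q) ` {j \<in> {1..N}. q dvd j + s} \<subseteq> {s div q <.. (N + s) div q}"
    proof (rule image_subsetI)
      fix j assume j: "j \<in> {j \<in> {1..N}. q dvd j + s}"
      then have "s < (j + s) div q * q" by auto
      then have "s div q < (j + s) div q" using q by (simp add: div_less_iff_less_mult)
      moreover have "(j + s) div q \<le> (N + s) div q" using j by (simp add: div_le_mono)
      ultimately show "(j + s) div q \<in> {s div q <.. (N + s) div q}" by simp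
    qed
    show "(\<lambda>i. i * q - s) ` {s div q <.. (N + s) div q} \<subseteq> {j \<in> {1..N}. q dvd j + s}"
      using q by (auto simp: div_less_iff_less_mult less_eq_div_iff_mult_less_eq)
  qed
  then show ?thesis by (simp add: bij_betw_same_card)
qed

lemma card_dvd_add_bounds:
  fixes q s N :: nat
  assumes q: "q > 0"
  shows "real N / q - 1 \<le> real (card {j \<in> {1..N}. q dvd j + s})"
    and "real (card {j \<in> {1..N}. q dvd j + s}) \<le> real N / q + 1"
proof -
  have "real (card {j \<in> {1..N}. q dvd j + s}) = real ((N + s) div q) - real (s div q)"
    using card_dvd_add[OF q, of N s] div_le_mono[of s "N + s" q] by simp
  moreover have "real (N + s) / q = real N / q + real s / q" by (simp add: add_divide_distrib)
  ultimately show "real N / q - 1 \<le> real (card {j \<in> {1..N}. q dvd j + s})"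
    and "real (card {j \<in> {1..N}. q dvd j + s}) \<le> real N / q + 1"
    using real_div_bounds[of "N + s" q] real_div_bounds[of s q] by linarith+
qed

lemma coprime_if_dvd_dvd_Suc: "d dvd n \<Longrightarrow> e dvd Suc n \<Longrightarrow> coprime d (e::nat)"
  using coprime_divisors[OF _ _ coprime_Suc_right_nat] .

lemma card_dvd_dvd_Suc_eq:
  fixes d e X :: nat
  assumes "d \<ge> 1" "coprime d e"
  obtains s where "card {n \<in> {1..X}. d dvd n \<and> e dvd n + 1} = card {j \<in> {1..X div d}. e dvd j + s}"
proof -
  obtain s r where "d * s = e * r + 1"
    using bezout_nat[of d e] assms by auto
  \<comment> \<open>\<open>s\<close> inverts \<open>d\<close> modulo \<open>e\<close>, so \<open>e | d j + 1\<close> iff \<open>e | j + s\<close>.\<close>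
  then have "d * (j + s) = (d * j + 1) + e * r" for j by (simp add: algebra_simps)
  then have iff: "e dvd d * j + 1 \<longleftrightarrow> e dvd j + s" for j
    using coprime_dvd_mult_right_iff[of e d "j + s"] assms(2)
    by (metis coprime_commute dvd_add_left_iff dvd_triv_left)
  have "{n \<in> {1..X}. d dvd n \<and> e dvd n + 1} = (\<lambda>j. d * j) ` {j \<in> {1..X div d}. e dvd j + s}"
  proof (intro equalityI subsetI)
    fix n assume n: "n \<in> {n \<in> {1..X}. d dvd n \<and> e dvd n + 1}"
    then obtain j where j: "n = d * j" by (auto elim: dvdE)
    then have "j \<in> {j \<in> {1..X div d}. e dvd j + s}"
      using n assms(1) iff[of j] by (auto simp: less_eq_div_iff_mult_less_eq mult.commute)
    then show "n \<in> (\<lambda>j. d * j) ` {j \<in> {1..X div d}. e dvd j + s}" using j by blast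
  next
    fix n assume "n \<in> (\<lambda>j. d * j) ` {j \<in> {1..X div d}. e dvd j + s}"
    then obtain j where "n = d * j" "j \<in> {j \<in> {1..X div d}. e dvd j + s}" by blast
    then show "n \<in> {n \<in> {1..X}. d dvd n \<and> e dvd n + 1}"
      using assms(1) iff[of j] by (auto simp: less_eq_div_iff_mult_less_eq mult.commute)
  qed
  moreover have "inj_on (\<lambda>j. d * j) {j \<in> {1..X div d}. e dvd j + s}"
    using assms(1) by (auto intro: inj_onI)
  ultimately show ?thesis using that by (simp add: card_image)
qed

lemma card_dvd_dvd_Suc_approx:
  fixes d e :: nat and x :: real
  assumes d: "d \<ge> 1" and e: "e \<ge> 1" and cop: "coprime d e" and x: "x \<ge> 0"
  shows "\<bar>real (card {n \<in> {1..nat \<lfloor>x\<rfloor>}. d dvd n \<and> e dvd n + 1}) - x / (real d * real e)\<bar> \<le> 3"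
proof -
  define X where "X = nat \<lfloor>x\<rfloor>"
  define Q where "Q = X div d"
  obtain s where s: "card {n \<in> {1..X}. d dvd n \<and> e dvd n + 1} = card {j \<in> {1..Q}. e dvd j + s}"
    using card_dvd_dvd_Suc_eq[OF d cop] unfolding Q_def by blast
  have X: "x - 1 < real X" "real X \<le> x" unfolding X_def using x by linarith+
  have d': "real d \<ge> 1" using d by simp
  have "real X < real d * real Q + real d" "real d * real Q \<le> real X"
    using real_div_bounds[of X d] d' unfolding Q_def by (auto simp: field_simps)
  then have "x < real d * real Q + 2 * real d" "real d * real Q \<le> x"
    using X d' by linarith+
  then have "x / d - 2 < real Q" "real Q \<le> x / d"
    using d' by (simp_all add: field_simps)
  then have "x / (real d * real e) - 2 \<le> real Q / e" "real Q / e \<le> x / (real d * real e)"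
    using e by (auto simp: field_simps)
  then show ?thesis
    using card_dvd_add_bounds[of e Q s] e s unfolding X_def by (simp add: abs_le_iff)
qed

lemma card_dvd_Suc_le:
  fixes e :: nat and x :: real
  assumes e: "e \<ge> 1" and x: "x \<ge> 1" and eX: "e \<le> nat \<lfloor>x\<rfloor> + 1"
  shows "real (card {n \<in> {1..nat \<lfloor>x\<rfloor>}. e dvd n + 1}) \<le> 3 * x / real e"
proof -
  define X where "X = nat \<lfloor>x\<rfloor>"
  have X: "real X \<le> x" "real X + 1 \<le> 2 * x" "real e \<le> real X + 1"
    using x eX unfolding X_def by linarith+
  have "real (card {n \<in> {1..X}. e dvd n + 1}) \<le> real X / e + 1"
    using card_dvd_add_bounds(2)[of e X 1] e by simp
  also have "\<dots> = (real X + real e) / e" using e by (simp add: field_simps)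
  also have "\<dots> \<le> 3 * x / e" using X e by (intro divide_right_mono) auto
  finally show ?thesis unfolding X_def .
qed

section \<open>The constant \<open>c\<^sub>k\<^sub>,\<^sub>m\<close> as a double series\<close>

definition c_term :: "nat \<Rightarrow> nat \<Rightarrow> nat \<Rightarrow> nat \<Rightarrow> real" where
  "c_term k m d e =
     (if coprime d e then real_of_int (F k d) * real_of_int (F m e) / (real d * real e) else 0)"

definition c_partial :: "nat \<Rightarrow> nat \<Rightarrow> nat \<Rightarrow> nat \<Rightarrow> real" where
  "c_partial k m D E = (\<Sum>(d, e)\<in>{1..D} \<times> {1..E}. c_term k m d e)"

definition c_tail :: "nat \<Rightarrow> nat \<Rightarrow> real \<Rightarrow> real \<Rightarrow> real" where
  "c_tail a b y z = 2 * kappa ^ a * y powr (1/a - 1) * (1 + 2 * kappa ^ b)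
                    + (1 + 2 * kappa ^ a) * (2 * kappa ^ b * z powr (1/b - 1))"

lemma one_le_if_two_le_tet: "2 \<le> tet 2 k \<Longrightarrow> k \<ge> 1"
  by (cases k) auto

lemma abs_F_le_full:
  assumes "2 \<le> a" "a \<le> tet 2 k"
  shows "\<bar>real_of_int (F k d)\<bar> \<le> of_bool (full a d)"
proof -
  have k: "k \<ge> 1" using assms one_le_if_two_le_tet by simp
  show ?thesis
  proof (cases "F k d = 0")
    case False
    then have "full a d" using full_if_F_nonzero[OF k] full_mono assms(2) by blast
    then show ?thesis using abs_F_le_1[OF k, of d] by simp
  qed simp
qed

lemma abs_c_term_le:
  assumes "2 \<le> a" "a \<le> tet 2 k" "2 \<le> b" "b \<le> tet 2 m"
  shows "\<bar>c_term k m d e\<bar> \<le> of_bool (full a d) / real d * (of_bool (full b e) / real e)"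
proof -
  have "\<bar>real_of_int (F k d) * real_of_int (F m e)\<bar> \<le> of_bool (full a d) * of_bool (full b e)"
    unfolding abs_mult using assms by (intro mult_mono abs_F_le_full) auto
  then show ?thesis
    by (auto simp: c_term_def intro: divide_right_mono)
qed

lemma sum_full_inverse_gt_le:
  assumes "t \<ge> 2" "y \<ge> 1"
  shows "(\<Sum>d\<in>{nat \<lfloor>y\<rfloor><..D}. of_bool (full t d) / real d) \<le> 2 * kappa ^ t * y powr (1/t - 1)"
proof -
  have "(\<Sum>d\<in>{nat \<lfloor>y\<rfloor><..D}. of_bool (full t d) / real d) = (\<Sum>d | y < real d \<and> d \<le> D \<and> full t d. 1 / real d)"
    using assms by (intro sum.mono_neutral_cong_right) (auto simp: nat_less_iff floor_less_iff)
  also have "\<dots> \<le> 2 * kappa ^ t * y powr (1/t - 1)" using assms by (intro sum_inverse_full_gt_le) auto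
  finally show ?thesis .
qed

lemma sum_full_inverse_le:
  assumes "t \<ge> 2"
  shows "(\<Sum>d\<in>{1..D}. of_bool (full t d) / real d) \<le> 1 + 2 * kappa ^ t"
proof -
  have "(\<Sum>d\<in>{1..D}. of_bool (full t d) / real d) = (\<Sum>d | d \<le> D \<and> full t d. 1 / real d)"
    by (intro sum.mono_neutral_cong_right) (auto simp: full_def)
  also have "\<dots> \<le> 1 + 2 * kappa ^ t" by (rule sum_inverse_full_le[OF assms])
  finally show ?thesis .
qed

lemma sum_abs_c_term_outside_le:
  assumes ab: "2 \<le> a" "a \<le> tet 2 k" "2 \<le> b" "b \<le> tet 2 m"
    and yz: "y \<ge> 1" "z \<ge> 1" and DE: "nat \<lfloor>y\<rfloor> \<le> D" "nat \<lfloor>z\<rfloor> \<le> E"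
  shows "(\<Sum>(d, e)\<in>{1..D} \<times> {1..E} - {1..nat \<lfloor>y\<rfloor>} \<times> {1..nat \<lfloor>z\<rfloor>}. \<bar>c_term k m d e\<bar>) \<le> c_tail a b y z"
proof -
  define Y Z where "Y = nat \<lfloor>y\<rfloor>" and "Z = nat \<lfloor>z\<rfloor>"
  define g h where "g = (\<lambda>d. of_bool (full a d) / real d)" and "h = (\<lambda>e. of_bool (full b e) / real e)"
  have gh: "g d \<ge> 0" "h e \<ge> 0" for d e by (simp_all add: g_def h_def)
  \<comment> \<open>Outside the box \<open>[1, Y] \<times> [1, Z]\<close>, either \<open>d > Y\<close> or \<open>e > Z\<close>.\<close>
  have "(\<Sum>(d, e)\<in>{1..D} \<times> {1..E} - {1..Y} \<times> {1..Z}. \<bar>c_term k m d e\<bar>)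
      \<le> (\<Sum>(d, e)\<in>{1..D} \<times> {1..E} - {1..Y} \<times> {1..Z}. g d * h e)"
    using abs_c_term_le[OF ab] by (intro sum_mono) (auto simp: g_def h_def)
  also have "\<dots> \<le> (\<Sum>(d, e)\<in>{Y<..D} \<times> {1..E} \<union> {1..D} \<times> {Z<..E}. g d * h e)"
    using gh by (intro sum_mono2) (auto intro: mult_nonneg_nonneg)
  also have "\<dots> \<le> (\<Sum>(d, e)\<in>{Y<..D} \<times> {1..E}. g d * h e) + (\<Sum>(d, e)\<in>{1..D} \<times> {Z<..E}. g d * h e)"
    using gh by (subst sum_Un) (auto intro!: sum_nonneg mult_nonneg_nonneg)
  also have "\<dots> = (\<Sum>d\<in>{Y<..D}. g d) * (\<Sum>e\<in>{1..E}. h e) + (\<Sum>d\<in>{1..D}. g d) * (\<Sum>e\<in>{Z<..E}. h e)"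
    by (simp add: sum_product sum.cartesian_product)
  also have "\<dots> \<le> (2 * kappa ^ a * y powr (1/a - 1)) * (1 + 2 * kappa ^ b)
                 + (1 + 2 * kappa ^ a) * (2 * kappa ^ b * z powr (1/b - 1))"
    unfolding g_def h_def Y_def Z_def using ab yz
    by (intro add_mono mult_mono sum_full_inverse_gt_le sum_full_inverse_le sum_nonneg)
       (auto simp: kappa_pos less_imp_le)
  finally show ?thesis by (simp add: Y_def Z_def c_tail_def mult.assoc)
qed

lemma abs_c_partial_diff_le:
  assumes ab: "2 \<le> a" "a \<le> tet 2 k" "2 \<le> b" "b \<le> tet 2 m"
    and yz: "y \<ge> 1" "z \<ge> 1" and DE: "nat \<lfloor>y\<rfloor> \<le> D" "nat \<lfloor>z\<rfloor> \<le> E"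
  shows "\<bar>c_partial k m D E - c_partial k m (nat \<lfloor>y\<rfloor>) (nat \<lfloor>z\<rfloor>)\<bar> \<le> c_tail a b y z"
proof -
  let ?B = "{1..nat \<lfloor>y\<rfloor>} \<times> {1..nat \<lfloor>z\<rfloor>}"
  have "?B \<subseteq> {1..D} \<times> {1..E}" using DE by auto
  then have "c_partial k m D E - c_partial k m (nat \<lfloor>y\<rfloor>) (nat \<lfloor>z\<rfloor>)
      = (\<Sum>(d, e)\<in>{1..D} \<times> {1..E} - ?B. c_term k m d e)"
    unfolding c_partial_def by (subst sum.subset_diff) auto
  also have "\<bar>\<dots>\<bar> \<le> (\<Sum>(d, e)\<in>{1..D} \<times> {1..E} - ?B. \<bar>c_term k m d e\<bar>)"
    using sum_abs[of "\<lambda>(d, e). c_term k m d e"] by (simp add: case_prod_unfold)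
  also have "\<dots> \<le> c_tail a b y z" by (rule sum_abs_c_term_outside_le[OF assms])
  finally show ?thesis .
qed

lemma c_tail_tendsto_0:
  assumes "a \<ge> 2" "b \<ge> 2"
  shows "(\<lambda>L. c_tail a b (real L) (real L)) \<longlonglongrightarrow> 0"
proof -
  have "(\<lambda>L. real L powr (1/a - 1)) \<longlonglongrightarrow> 0" "(\<lambda>L. real L powr (1/b - 1)) \<longlonglongrightarrow> 0"
    using assms by (auto intro!: tendsto_neg_powr filterlim_real_sequentially)
  then have "(\<lambda>L. c_tail a b (real L) (real L)) \<longlonglongrightarrow>
      2 * kappa ^ a * 0 * (1 + 2 * kappa ^ b) + (1 + 2 * kappa ^ a) * (2 * kappa ^ b * 0)"
    unfolding c_tail_def by (intro tendsto_intros)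
  then show ?thesis by simp
qed

lemma convergent_c_partial:
  assumes "k \<ge> 1" "m \<ge> 1"
  shows "convergent (\<lambda>L. c_partial k m L L)"
proof (rule Cauchy_convergent, rule CauchyI)
  have tet: "2 \<le> tet 2 k" "2 \<le> tet 2 m" using tet_2_ge_2 assms by auto
  fix \<epsilon> :: real assume "\<epsilon> > 0"
  then have "eventually (\<lambda>L. c_tail 2 2 (real L) (real L) < \<epsilon> / 2) sequentially"
    using c_tail_tendsto_0[of 2 2] by (intro order_tendstoD(2)) auto
  then obtain M0 where M0: "\<forall>L\<ge>M0. c_tail 2 2 (real L) (real L) < \<epsilon> / 2"
    unfolding eventually_sequentially by auto
  define M where "M = max M0 1"
  have M: "M \<ge> 1" "c_tail 2 2 (real M) (real M) < \<epsilon> / 2" using M0 by (auto simp: M_def)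
  have close: "\<bar>c_partial k m L L - c_partial k m M M\<bar> < \<epsilon> / 2" if "L \<ge> M" for L
  proof -
    have "\<bar>c_partial k m L L - c_partial k m (nat \<lfloor>real M\<rfloor>) (nat \<lfloor>real M\<rfloor>)\<bar> \<le> c_tail 2 2 M M"
      using M(1) that tet by (intro abs_c_partial_diff_le) auto
    then show ?thesis using M(2) by simp
  qed
  show "\<exists>M. \<forall>p\<ge>M. \<forall>q\<ge>M. norm (c_partial k m p p - c_partial k m q q) < \<epsilon>"
  proof (intro exI allI impI)
    fix p q assume "M \<le> p" "M \<le> q"
    from close[OF this(1)] close[OF this(2)]
    show "norm (c_partial k m p p - c_partial k m q q) < \<epsilon>"
      unfolding real_norm_def abs_less_iff by linarith
  qed
qed

definition euler_term :: "nat \<Rightarrow> nat \<Rightarrow> nat \<Rightarrow> nat \<Rightarrow> real" where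
  "euler_term k m p \<nu> =
     (real_of_int (F k (p ^ Suc \<nu>)) + real_of_int (F m (p ^ Suc \<nu>))) / real p ^ Suc \<nu>"

lemma c_eq_lim_euler_product:
  "c k m = lim (\<lambda>N. \<Prod>p\<in>{p. prime p \<and> p \<le> N}. 1 + suminf (euler_term k m p))"
  unfolding c_def euler_term_def ..

lemma euler_term_eq:
  assumes "k \<ge> 1" "m \<ge> 1" "prime p"
  shows "euler_term k m p \<nu> = (real_of_int (F_local k (Suc \<nu>)) + real_of_int (F_local m (Suc \<nu>))) / real p ^ Suc \<nu>"
  using assms F_prime_power[of _ p "Suc \<nu>"] by (simp only: euler_term_def)

lemma summable_euler_term:
  assumes "k \<ge> 1" "m \<ge> 1" "prime p"
  shows "summable (euler_term k m p)"
proof (rule summable_comparison_test')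
  have p: "real p > 1" using prime_gt_1_nat[OF assms(3)] by simp
  show "summable (\<lambda>\<nu>. 2 * (1 / real p) ^ Suc \<nu>)"
    using p by (intro summable_mult summable_Suc_iff[THEN iffD2] summable_geometric) auto
  fix \<nu> :: nat
  have "\<bar>real_of_int (F_local k (Suc \<nu>)) + real_of_int (F_local m (Suc \<nu>))\<bar> \<le> 2"
    using abs_F_local_le_1[of k "Suc \<nu>"] abs_F_local_le_1[of m "Suc \<nu>"] by linarith
  then show "norm (euler_term k m p \<nu>) \<le> 2 * (1 / real p) ^ Suc \<nu>"
    using p by (simp add: euler_term_eq[OF assms] power_one_over divide_right_mono)
qed

text \<open>Multiplying out the partial Euler product, with each local factor truncated after \<open>p\<^sup>M\<close>,
  produces exactly the terms \<open>c_term k m d e\<close> with \<open>d\<close>, \<open>e\<close> in \<open>smooth_coprime_pairs N M\<close>.\<close>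

definition exponent_pairs :: "nat \<Rightarrow> (nat \<times> nat) set" where
  "exponent_pairs M = {(i, j). i \<le> M \<and> j \<le> M \<and> (i = 0 \<or> j = 0)}"

definition smooth_coprime_pairs :: "nat \<Rightarrow> nat \<Rightarrow> (nat \<times> nat) set" where
  "smooth_coprime_pairs N M = {(d, e). d > 0 \<and> e > 0 \<and>
     prime_factors d \<subseteq> {p. prime p \<and> p \<le> N} \<and> prime_factors e \<subseteq> {p. prime p \<and> p \<le> N} \<and>
     (\<forall>p\<in>{p. prime p \<and> p \<le> N}. (multiplicity p d, multiplicity p e) \<in> exponent_pairs M)}"

lemma sum_exponent_pairs:
  fixes \<psi> :: "nat \<Rightarrow> nat \<Rightarrow> real"
  shows "(\<Sum>(i, j)\<in>exponent_pairs M. \<psi> i j) = \<psi> 0 0 + (\<Sum>\<nu><M. \<psi> (Suc \<nu>) 0) + (\<Sum>\<nu><M. \<psi> 0 (Suc \<nu>))"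
proof -
  define A B where "A = (\<lambda>\<nu>. (Suc \<nu>, 0::nat)) ` {..<M}" and "B = (\<lambda>\<nu>. (0::nat, Suc \<nu>)) ` {..<M}"
  have "exponent_pairs M = insert (0, 0) (A \<union> B)"
  proof (intro equalityI subsetI)
    fix x assume x: "x \<in> exponent_pairs M"
    then obtain i j where ij: "x = (i, j)" "i \<le> M" "j \<le> M" "i = 0 \<or> j = 0"
      by (auto simp: exponent_pairs_def)
    show "x \<in> insert (0, 0) (A \<union> B)"
    proof (cases "i = 0")
      case True
      then show ?thesis using ij by (cases j) (auto simp: B_def)
    next
      case False
      then show ?thesis using ij by (cases i) (auto simp: A_def)
    qed
  qed (auto simp: exponent_pairs_def A_def B_def)
  then have "(\<Sum>(i, j)\<in>exponent_pairs M. \<psi> i j) = \<psi> 0 0 + (\<Sum>(i, j)\<in>A \<union> B. \<psi> i j)"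
    by (simp only:) (subst sum.insert, auto simp: A_def B_def)
  also have "(\<Sum>(i, j)\<in>A \<union> B. \<psi> i j) = (\<Sum>(i, j)\<in>A. \<psi> i j) + (\<Sum>(i, j)\<in>B. \<psi> i j)"
    by (rule sum.union_disjoint) (auto simp: A_def B_def)
  also have "(\<Sum>(i, j)\<in>A. \<psi> i j) = (\<Sum>\<nu><M. \<psi> (Suc \<nu>) 0)"
    unfolding A_def by (subst sum.reindex) (auto intro: inj_onI)
  also have "(\<Sum>(i, j)\<in>B. \<psi> i j) = (\<Sum>\<nu><M. \<psi> 0 (Suc \<nu>))"
    unfolding B_def by (subst sum.reindex) (auto intro: inj_onI)
  finally show ?thesis by (simp add: add.assoc)
qed

lemma coprime_if_smooth_coprime_pairs:
  assumes "(d, e) \<in> smooth_coprime_pairs N M"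
  shows "coprime d e"
proof (rule ccontr)
  assume "\<not> coprime d e"
  then obtain p where p: "prime p" "p dvd d" "p dvd e"
    using prime_factor_nat[of "gcd d e"] by (auto simp: coprime_iff_gcd_eq_1)
  then have "p \<in> prime_factors d" "p \<in> prime_factors e"
    using assms by (auto simp: smooth_coprime_pairs_def in_prime_factors_iff)
  then show False
    using assms by (auto simp: smooth_coprime_pairs_def exponent_pairs_def prime_factors_multiplicity subset_iff)
qed

lemma prod_partial_euler_eq:
  assumes km: "k \<ge> 1" "m \<ge> 1"
  shows "(\<Prod>p | prime p \<and> p \<le> N. 1 + (\<Sum>\<nu><M. euler_term k m p \<nu>))
           = (\<Sum>(d, e)\<in>smooth_coprime_pairs N M. c_term k m d e)"
proof -
  define P where "P = {p. prime p \<and> p \<le> N}"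
  have P: "finite P" "\<forall>p\<in>P. prime p" by (auto simp: P_def)
  define \<psi> where "\<psi> = (\<lambda>(p::nat) i j.
    real_of_int (F_local k i) * real_of_int (F_local m j) / real p ^ (i + j))"
  have "(\<Prod>p\<in>P. 1 + (\<Sum>\<nu><M. euler_term k m p \<nu>)) = (\<Prod>p\<in>P. \<Sum>(i, j)\<in>exponent_pairs M. \<psi> p i j)"
    using P euler_term_eq[OF km]
    by (intro prod.cong refl)
       (simp add: sum_exponent_pairs \<psi>_def F_local_def[of _ 0] sum.distrib add_divide_distrib)
  also have "\<dots> = (\<Sum>(d, e)\<in>smooth_coprime_pairs N M. \<Prod>p\<in>P. \<psi> p (multiplicity p d) (multiplicity p e))"
    unfolding smooth_coprime_pairs_def P_def[symmetric]
    by (rule sum_prod_multiplicity_pairs_eq_prod_sum[OF P, symmetric])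
       (auto simp: exponent_pairs_def intro: finite_subset[of _ "{..M} \<times> {..M}"])
  also have "\<dots> = (\<Sum>(d, e)\<in>smooth_coprime_pairs N M. c_term k m d e)"
  proof (intro sum.cong refl, clarify)
    fix d e assume de: "(d, e) \<in> smooth_coprime_pairs N M"
    then have d: "d > 0" "prime_factors d \<subseteq> P" and e: "e > 0" "prime_factors e \<subseteq> P"
      by (auto simp: smooth_coprime_pairs_def P_def)
    have real_prod: "(\<Prod>p\<in>P. real p ^ multiplicity p n) = real n" if "n > 0" "prime_factors n \<subseteq> P" for n
      using arg_cong[OF prod_multiplicity_superset[OF P that], of real] by simp
    have "(\<Prod>p\<in>P. \<psi> p (multiplicity p d) (multiplicity p e))
        = (\<Prod>p\<in>P. real_of_int (F_local k (multiplicity p d))) * (\<Prod>p\<in>P. real_of_int (F_local m (multiplicity p e)))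
          / ((\<Prod>p\<in>P. real p ^ multiplicity p d) * (\<Prod>p\<in>P. real p ^ multiplicity p e))"
      unfolding \<psi>_def by (simp add: prod.distrib prod_dividef power_add)
    also have "\<dots> = real_of_int (F k d) * real_of_int (F m e) / (real d * real e)"
      using F_eq_prod_superset[OF km(1) P d] F_eq_prod_superset[OF km(2) P e]
      by (simp add: real_prod d e)
    also have "\<dots> = c_term k m d e"
      using coprime_if_smooth_coprime_pairs[OF de] by (simp add: c_term_def)
    finally show "(\<Prod>p\<in>P. \<psi> p (multiplicity p d) (multiplicity p e)) = c_term k m d e" .
  qed
  finally show ?thesis by (simp add: P_def)
qed

lemma coprime_box_subset_smooth_coprime_pairs:
  assumes "N \<le> M"
  shows "{(d, e) \<in> {1..N} \<times> {1..N}. coprime d e} \<subseteq> smooth_coprime_pairs N M"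
proof
  fix x assume "x \<in> {(d, e) \<in> {1..N} \<times> {1..N}. coprime d e}"
  then obtain d e where x: "x = (d, e)" and de: "(d, e) \<in> {1..N} \<times> {1..N}" "coprime d e"
    by auto
  have "multiplicity p n \<le> M" if "prime p" "n \<in> {1..N}" for p n
    using multiplicity_less_self[OF that(1), of n] that assms by (cases "n = 1") auto
  moreover have "multiplicity p d = 0 \<or> multiplicity p e = 0" if "prime p" for p
  proof (rule ccontr)
    assume "\<not> ?thesis"
    then have "p dvd d" "p dvd e"
      using that de(1) by (auto simp: prime_multiplicity_gt_zero_iff[symmetric])
    then show False using coprime_common_divisor[OF de(2)] that not_prime_unit by blast
  qed
  moreover have "prime_factors n \<subseteq> {p. prime p \<and> p \<le> N}" if "n \<in> {1..N}" for n
    using that by (auto simp: in_prime_factors_iff dest!: dvd_imp_le)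
  ultimately show "x \<in> smooth_coprime_pairs N M"
    using de x by (auto simp: smooth_coprime_pairs_def exponent_pairs_def)
qed

lemma smooth_coprime_pairs_subset_box:
  "smooth_coprime_pairs N M \<subseteq>
     {1..\<Prod>p | prime p \<and> p \<le> N. p ^ M} \<times> {1..\<Prod>p | prime p \<and> p \<le> N. p ^ M}"
proof -
  define P where "P = {p. prime p \<and> p \<le> N}"
  have P: "finite P" "\<forall>p\<in>P. prime p" by (auto simp: P_def)
  have "n \<le> (\<Prod>p\<in>P. p ^ M)"
    if "n > 0" "prime_factors n \<subseteq> P" "\<forall>p\<in>P. multiplicity p n \<le> M" for n
  proof -
    have "n = (\<Prod>p\<in>P. p ^ multiplicity p n)" using prod_multiplicity_superset[OF P that(1,2)] by simp
    also have "\<dots> \<le> (\<Prod>p\<in>P. p ^ M)"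
      using that(3) P by (intro prod_mono) (auto intro!: power_increasing simp: prime_gt_0_nat Suc_le_eq)
    finally show ?thesis .
  qed
  then show ?thesis
    by (force simp: smooth_coprime_pairs_def exponent_pairs_def P_def[symmetric] Suc_le_eq)
qed

lemma abs_smooth_sum_minus_c_partial_le:
  assumes km: "k \<ge> 1" "m \<ge> 1" and N: "N \<ge> 1" "N \<le> M"
  shows "\<bar>(\<Sum>(d, e)\<in>smooth_coprime_pairs N M. c_term k m d e) - c_partial k m N N\<bar> \<le> c_tail 2 2 N N"
proof -
  define L where "L = (\<Prod>p | prime p \<and> p \<le> N. p ^ M)"
  define B C where "B = {1..N} \<times> {1..N}" and "C = smooth_coprime_pairs N M"
  have CL: "C \<subseteq> {1..L} \<times> {1..L}" unfolding C_def L_def by (rule smooth_coprime_pairs_subset_box)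
  have BC: "{(d, e) \<in> B. coprime d e} \<subseteq> C"
    unfolding B_def C_def by (rule coprime_box_subset_smooth_coprime_pairs[OF N(2)])
  have finC: "finite C" using CL by (rule finite_subset) auto
  have "(N, 1) \<in> C" using BC N(1) by (auto simp: B_def)
  then have NL: "N \<le> L" using CL by auto
  \<comment> \<open>Terms of \<open>B - C\<close> vanish since their indices are not coprime.\<close>
  have "(\<Sum>(d, e)\<in>B. c_term k m d e) = (\<Sum>(d, e)\<in>B \<inter> C. c_term k m d e)"
    using BC by (intro sum.mono_neutral_right) (auto simp: B_def c_term_def subset_iff split: if_splits)
  moreover have "(\<Sum>(d, e)\<in>C. c_term k m d e)
      = (\<Sum>(d, e)\<in>C - B. c_term k m d e) + (\<Sum>(d, e)\<in>B \<inter> C. c_term k m d e)"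
    using sum.Int_Diff[OF finC, of _ B] by (simp add: Int_commute add.commute)
  ultimately have "\<bar>(\<Sum>(d, e)\<in>C. c_term k m d e) - c_partial k m N N\<bar> = \<bar>\<Sum>(d, e)\<in>C - B. c_term k m d e\<bar>"
    by (simp add: c_partial_def B_def)
  also have "\<dots> \<le> (\<Sum>(d, e)\<in>C - B. \<bar>c_term k m d e\<bar>)"
    using sum_abs[of "\<lambda>(d, e). c_term k m d e"] by (simp add: case_prod_unfold)
  also have "\<dots> \<le> (\<Sum>(d, e)\<in>{1..L} \<times> {1..L} - {1..nat \<lfloor>real N\<rfloor>} \<times> {1..nat \<lfloor>real N\<rfloor>}. \<bar>c_term k m d e\<bar>)"
    using CL by (intro sum_mono2) (auto simp: B_def)
  also have "\<dots> \<le> c_tail 2 2 N N"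
    using N NL tet_2_ge_2 km by (intro sum_abs_c_term_outside_le) auto
  finally show ?thesis unfolding C_def .
qed

lemma abs_euler_product_minus_c_partial_le:
  assumes km: "k \<ge> 1" "m \<ge> 1" and N: "N \<ge> 1"
  shows "\<bar>(\<Prod>p | prime p \<and> p \<le> N. 1 + suminf (euler_term k m p)) - c_partial k m N N\<bar> \<le> c_tail 2 2 N N"
proof -
  have lim: "(\<lambda>M. \<Prod>p | prime p \<and> p \<le> N. 1 + (\<Sum>\<nu><M. euler_term k m p \<nu>))
               \<longlonglongrightarrow> (\<Prod>p | prime p \<and> p \<le> N. 1 + suminf (euler_term k m p))"
    by (intro tendsto_prod tendsto_add tendsto_const) (auto intro!: summable_LIMSEQ summable_euler_term[OF km])
  have "(\<lambda>M. \<bar>(\<Prod>p | prime p \<and> p \<le> N. 1 + (\<Sum>\<nu><M. euler_term k m p \<nu>)) - c_partial k m N N\<bar>)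
      \<longlonglongrightarrow> \<bar>(\<Prod>p | prime p \<and> p \<le> N. 1 + suminf (euler_term k m p)) - c_partial k m N N\<bar>"
    by (intro tendsto_intros lim)
  then show ?thesis
    using abs_smooth_sum_minus_c_partial_le[OF km N]
    by (intro LIMSEQ_le_const2) (auto simp: prod_partial_euler_eq[OF km])
qed

lemma c_partial_tendsto_c:
  assumes km: "k \<ge> 1" "m \<ge> 1"
  shows "(\<lambda>L. c_partial k m L L) \<longlonglongrightarrow> c k m"
proof -
  let ?E = "\<lambda>N. \<Prod>p | prime p \<and> p \<le> N. 1 + suminf (euler_term k m p)"
  obtain S where S: "(\<lambda>L. c_partial k m L L) \<longlonglongrightarrow> S"
    using convergent_c_partial[OF km] by (auto simp: convergent_def)
  have "(\<lambda>N. ?E N - c_partial k m N N) \<longlonglongrightarrow> 0"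
  proof (rule Lim_null_comparison)
    show "eventually (\<lambda>N. norm (?E N - c_partial k m N N) \<le> c_tail 2 2 N N) sequentially"
      unfolding eventually_sequentially using abs_euler_product_minus_c_partial_le[OF km]
      by (intro exI[of _ 1]) auto
  qed (rule c_tail_tendsto_0; simp)
  from tendsto_add[OF this S] have "?E \<longlonglongrightarrow> S" by simp
  then have "c k m = S" unfolding c_eq_lim_euler_product by (rule limI)
  with S show ?thesis by simp
qed

lemma abs_c_minus_c_partial_le:
  assumes ab: "2 \<le> a" "a \<le> tet 2 k" "2 \<le> b" "b \<le> tet 2 m" and yz: "y \<ge> 1" "z \<ge> 1"
  shows "\<bar>c k m - c_partial k m (nat \<lfloor>y\<rfloor>) (nat \<lfloor>z\<rfloor>)\<bar> \<le> c_tail a b y z"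
proof -
  have "k \<ge> 1" "m \<ge> 1" using ab one_le_if_two_le_tet by auto
  then have "(\<lambda>L. \<bar>c_partial k m L L - c_partial k m (nat \<lfloor>y\<rfloor>) (nat \<lfloor>z\<rfloor>)\<bar>)
      \<longlonglongrightarrow> \<bar>c k m - c_partial k m (nat \<lfloor>y\<rfloor>) (nat \<lfloor>z\<rfloor>)\<bar>"
    by (intro tendsto_intros c_partial_tendsto_c)
  then show ?thesis
    using abs_c_partial_diff_le[OF ab yz]
    by (intro LIMSEQ_le_const2) (auto intro!: exI[of _ "max (nat \<lfloor>y\<rfloor>) (nat \<lfloor>z\<rfloor>)"])
qed

section \<open>The main estimate\<close>

definition sum_f_dvd_Suc :: "nat \<Rightarrow> nat \<Rightarrow> nat \<Rightarrow> real" where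
  "sum_f_dvd_Suc k X e = (\<Sum>n\<in>{1..X}. if e dvd n + 1 then real_of_int (f k n) else 0)"

lemma Hcount_eq_sum:
  assumes "x \<ge> 0"
  shows "real (Hcount k m x) = (\<Sum>n\<in>{1..nat \<lfloor>x\<rfloor>}. real_of_int (f k n) * real_of_int (f m (n + 1)))"
proof -
  have "{n. 1 \<le> n \<and> real n \<le> x \<and> H n \<le> k \<and> H (n + 1) \<le> m}
      = {n \<in> {1..nat \<lfloor>x\<rfloor>}. H n \<le> k \<and> H (n + 1) \<le> m}"
    using assms by (auto simp: le_nat_iff le_floor_iff)
  then have "real (Hcount k m x) = (\<Sum>n\<in>{n \<in> {1..nat \<lfloor>x\<rfloor>}. H n \<le> k \<and> H (n + 1) \<le> m}. 1)"
    by (simp add: Hcount_def)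
  also have "\<dots> = (\<Sum>n\<in>{1..nat \<lfloor>x\<rfloor>}. if H n \<le> k \<and> H (n + 1) \<le> m then 1 else 0)"
    by (rule sum.inter_filter) simp
  also have "\<dots> = (\<Sum>n\<in>{1..nat \<lfloor>x\<rfloor>}. real_of_int (f k n) * real_of_int (f m (n + 1)))"
    by (intro sum.cong refl) (simp add: f_def)
  finally show ?thesis .
qed

lemma f_eq_sum_F_upto:
  assumes "k \<ge> 1" "1 \<le> n" "n \<le> Y"
  shows "real_of_int (f k n) = (\<Sum>d\<in>{1..Y}. if d dvd n then real_of_int (F k d) else 0)"
proof -
  have "real_of_int (f k n) = (\<Sum>d | d dvd n. real_of_int (F k d))"
    using f_eq_divisor_sum_F[of n k] assms by simp
  also have "{d. d dvd n} = {d \<in> {1..Y}. d dvd n}"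
    using assms by (auto dest: dvd_imp_le intro: Nat.gr0I)
  also have "(\<Sum>d\<in>{d \<in> {1..Y}. d dvd n}. real_of_int (F k d))
      = (\<Sum>d\<in>{1..Y}. if d dvd n then real_of_int (F k d) else 0)"
    by (rule sum.inter_filter) simp
  finally show ?thesis .
qed

lemma Hcount_eq_sum_F_mult_sum_f:
  assumes "m \<ge> 1" "x \<ge> 0"
  shows "real (Hcount k m x)
           = (\<Sum>e\<in>{1..nat \<lfloor>x\<rfloor> + 1}. real_of_int (F m e) * sum_f_dvd_Suc k (nat \<lfloor>x\<rfloor>) e)"
proof -
  let ?X = "nat \<lfloor>x\<rfloor>"
  have "real_of_int (f k n) * real_of_int (f m (n + 1)) = (\<Sum>e\<in>{1..?X + 1}.
          if e dvd n + 1 then real_of_int (f k n) * real_of_int (F m e) else 0)" if "n \<in> {1..?X}" for n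
  proof -
    have "real_of_int (f m (n + 1)) = (\<Sum>e\<in>{1..?X + 1}. if e dvd n + 1 then real_of_int (F m e) else 0)"
      using that by (intro f_eq_sum_F_upto assms(1)) auto
    then have "real_of_int (f k n) * real_of_int (f m (n + 1))
        = (\<Sum>e\<in>{1..?X + 1}. real_of_int (f k n) * (if e dvd n + 1 then real_of_int (F m e) else 0))"
      by (simp only: sum_distrib_left)
    then show ?thesis by (simp add: if_distrib cong: if_cong)
  qed
  then have "real (Hcount k m x) = (\<Sum>n\<in>{1..?X}. \<Sum>e\<in>{1..?X + 1}.
          if e dvd n + 1 then real_of_int (f k n) * real_of_int (F m e) else 0)"
    unfolding Hcount_eq_sum[OF assms(2)] by (rule sum.cong[OF refl])
  also have "\<dots> = (\<Sum>e\<in>{1..?X + 1}. \<Sum>n\<in>{1..?X}.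
          if e dvd n + 1 then real_of_int (f k n) * real_of_int (F m e) else 0)"
    by (rule sum.swap)
  also have "\<dots> = (\<Sum>e\<in>{1..?X + 1}. real_of_int (F m e) * sum_f_dvd_Suc k ?X e)"
    by (simp add: sum_f_dvd_Suc_def sum_distrib_left if_distrib mult.commute cong: if_cong)
  finally show ?thesis .
qed

lemma sum_f_dvd_Suc_eq:
  assumes "k \<ge> 1"
  shows "sum_f_dvd_Suc k X e
           = (\<Sum>d\<in>{1..X}. real_of_int (F k d) * real (card {n \<in> {1..X}. d dvd n \<and> e dvd n + 1}))"
proof -
  have "sum_f_dvd_Suc k X e
      = (\<Sum>n\<in>{1..X}. \<Sum>d\<in>{1..X}. if d dvd n \<and> e dvd n + 1 then real_of_int (F k d) else 0)"
    unfolding sum_f_dvd_Suc_def using f_eq_sum_F_upto[OF assms, of _ X]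
    by (intro sum.cong refl) (auto intro: sum.cong)
  also have "\<dots> = (\<Sum>d\<in>{1..X}. \<Sum>n\<in>{1..X}. if d dvd n \<and> e dvd n + 1 then real_of_int (F k d) else 0)"
    by (rule sum.swap)
  also have "\<dots> = (\<Sum>d\<in>{1..X}. real_of_int (F k d) * real (card {n \<in> {1..X}. d dvd n \<and> e dvd n + 1}))"
    by (simp add: sum.inter_filter[symmetric] mult.commute)
  finally show ?thesis .
qed

lemma abs_sum_f_dvd_Suc_le: "\<bar>sum_f_dvd_Suc k X e\<bar> \<le> real (card {n \<in> {1..X}. e dvd n + 1})"
proof -
  have "\<bar>sum_f_dvd_Suc k X e\<bar> \<le> (\<Sum>n\<in>{1..X}. if e dvd n + 1 then 1 else 0)"
    unfolding sum_f_dvd_Suc_def by (rule order_trans[OF sum_abs sum_mono]) (simp add: f_def)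
  also have "\<dots> = real (card {n \<in> {1..X}. e dvd n + 1})"
    by (simp add: sum.inter_filter[symmetric])
  finally show ?thesis .
qed

lemma sum_full_le:
  assumes "t \<ge> 1" "x \<ge> 1"
  shows "(\<Sum>d\<in>{1..nat \<lfloor>x\<rfloor>}. of_bool (full t d)) \<le> kappa ^ t * x powr (1 / t)"
proof -
  have "(\<Sum>d\<in>{1..nat \<lfloor>x\<rfloor>}. of_bool (full t d)) = real (card {d. real d \<le> x \<and> full t d})"
    using assms by (subst sum.mono_neutral_cong_right[where S = "{d. real d \<le> x \<and> full t d}"])
      (auto simp: full_def le_nat_iff le_floor_iff)
  also have "\<dots> \<le> kappa ^ t * x powr (1 / t)" using assms by (intro card_full_le) auto
  finally show ?thesis .
qed

lemma abs_card_term_minus_c_term_le: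
  assumes ab: "2 \<le> a" "a \<le> tet 2 k" "2 \<le> b" "b \<le> tet 2 m"
    and de: "d \<ge> 1" "e \<ge> 1" and x: "x \<ge> 0"
  shows "\<bar>real_of_int (F m e) * real_of_int (F k d) * real (card {n \<in> {1..nat \<lfloor>x\<rfloor>}. d dvd n \<and> e dvd n + 1})
            - x * c_term k m d e\<bar> \<le> 3 * (of_bool (full a d) * of_bool (full b e))"
proof (cases "coprime d e")
  case True
  let ?F = "real_of_int (F m e) * real_of_int (F k d)"
  let ?N = "real (card {n \<in> {1..nat \<lfloor>x\<rfloor>}. d dvd n \<and> e dvd n + 1})"
  have "?F * ?N - x * c_term k m d e = ?F * (?N - x / (real d * real e))"
    using True de by (simp add: c_term_def field_simps)
  also have "\<bar>\<dots>\<bar> = \<bar>real_of_int (F k d)\<bar> * \<bar>real_of_int (F m e)\<bar> * \<bar>?N - x / (real d * real e)\<bar>"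
    by (simp add: abs_mult)
  also have "\<dots> \<le> of_bool (full a d) * of_bool (full b e) * 3"
    using ab de True x
    by (intro mult_mono abs_F_le_full card_dvd_dvd_Suc_approx) auto
  finally show ?thesis by simp
next
  case False
  then have "{n \<in> {1..nat \<lfloor>x\<rfloor>}. d dvd n \<and> e dvd n + 1} = {}"
    using coprime_if_dvd_dvd_Suc by auto
  then have N: "real (card {n \<in> {1..nat \<lfloor>x\<rfloor>}. d dvd n \<and> e dvd n + 1}) = 0"
    by (simp only: card.empty of_nat_0)
  show ?thesis unfolding N c_term_def using False by simp
qed

lemma large_divisors_bound:
  assumes b: "2 \<le> b" "b \<le> tet 2 m" and x: "x \<ge> 1" and E: "1 \<le> E" "E \<le> x"
  shows "\<bar>\<Sum>e\<in>{nat \<lfloor>E\<rfloor><..nat \<lfloor>x\<rfloor> + 1}. real_of_int (F m e) * sum_f_dvd_Suc k (nat \<lfloor>x\<rfloor>) e\<bar>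
           \<le> 6 * kappa ^ b * (x * E powr (1/b - 1))"
proof -
  let ?I = "{nat \<lfloor>E\<rfloor><..nat \<lfloor>x\<rfloor> + 1}"
  have "\<bar>real_of_int (F m e) * sum_f_dvd_Suc k (nat \<lfloor>x\<rfloor>) e\<bar> \<le> 3 * x * (of_bool (full b e) / real e)"
    if e: "e \<in> ?I" for e
  proof -
    have "\<bar>sum_f_dvd_Suc k (nat \<lfloor>x\<rfloor>) e\<bar> \<le> 3 * x / real e"
      using e x by (intro order_trans[OF abs_sum_f_dvd_Suc_le card_dvd_Suc_le]) auto
    then show ?thesis
      using abs_F_le_full[OF b, of e] unfolding abs_mult
      by (auto intro: mult_mono[THEN order_trans])
  qed
  then have "\<bar>\<Sum>e\<in>?I. real_of_int (F m e) * sum_f_dvd_Suc k (nat \<lfloor>x\<rfloor>) e\<bar>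
      \<le> (\<Sum>e\<in>?I. 3 * x * (of_bool (full b e) / real e))"
    by (intro order_trans[OF sum_abs sum_mono])
  also have "\<dots> = 3 * x * (\<Sum>e\<in>?I. of_bool (full b e) / real e)" by (simp add: sum_distrib_left)
  also have "\<dots> \<le> 3 * x * (2 * kappa ^ b * E powr (1/b - 1))"
    using b x E by (intro mult_left_mono sum_full_inverse_gt_le) auto
  finally show ?thesis by (simp add: mult_ac)
qed

lemma small_divisors_bound:
  assumes ab: "2 \<le> a" "a \<le> tet 2 k" "2 \<le> b" "b \<le> tet 2 m" and x: "x \<ge> 1" and E: "E \<ge> 1"
  shows "\<bar>(\<Sum>e\<in>{1..nat \<lfloor>E\<rfloor>}. real_of_int (F m e) * sum_f_dvd_Suc k (nat \<lfloor>x\<rfloor>) e)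
            - x * c_partial k m (nat \<lfloor>x\<rfloor>) (nat \<lfloor>E\<rfloor>)\<bar>
         \<le> 3 * kappa ^ a * kappa ^ b * (x powr (1/a) * E powr (1/b))"
proof -
  let ?X = "nat \<lfloor>x\<rfloor>" and ?Y = "nat \<lfloor>E\<rfloor>"
  let ?N = "\<lambda>d e. real (card {n \<in> {1..?X}. d dvd n \<and> e dvd n + 1})"
  have k: "k \<ge> 1" using ab one_le_if_two_le_tet by auto
  define g h where "g = (\<lambda>d. of_bool (full a d) :: real)" and "h = (\<lambda>e. of_bool (full b e) :: real)"
  have "x * c_partial k m ?X ?Y = (\<Sum>d\<in>{1..?X}. \<Sum>e\<in>{1..?Y}. x * c_term k m d e)"
    by (simp add: c_partial_def sum_distrib_left sum.cartesian_product case_prod_unfold)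
  also have "\<dots> = (\<Sum>e\<in>{1..?Y}. \<Sum>d\<in>{1..?X}. x * c_term k m d e)"
    by (rule sum.swap)
  moreover have "(\<Sum>e\<in>{1..?Y}. real_of_int (F m e) * sum_f_dvd_Suc k ?X e)
      = (\<Sum>e\<in>{1..?Y}. \<Sum>d\<in>{1..?X}. real_of_int (F m e) * real_of_int (F k d) * ?N d e)"
    by (simp add: sum_f_dvd_Suc_eq[OF k] sum_distrib_left mult.assoc)
  ultimately have "\<bar>(\<Sum>e\<in>{1..?Y}. real_of_int (F m e) * sum_f_dvd_Suc k ?X e) - x * c_partial k m ?X ?Y\<bar>
      \<le> (\<Sum>e\<in>{1..?Y}. \<Sum>d\<in>{1..?X}.
            \<bar>real_of_int (F m e) * real_of_int (F k d) * ?N d e - x * c_term k m d e\<bar>)"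
    by (simp only: sum_subtractf[symmetric]) (rule order_trans[OF sum_abs sum_mono[OF sum_abs]])
  also have "\<dots> \<le> (\<Sum>e\<in>{1..?Y}. \<Sum>d\<in>{1..?X}. 3 * (g d * h e))"
    unfolding g_def h_def using ab x by (intro sum_mono abs_card_term_minus_c_term_le) auto
  also have "\<dots> = 3 * ((\<Sum>d\<in>{1..?X}. g d) * (\<Sum>e\<in>{1..?Y}. h e))"
    by (simp add: sum_distrib_left sum_distrib_right mult_ac sum.swap[of _ "{1..?Y}"])
  also have "\<dots> \<le> 3 * ((kappa ^ a * x powr (1/a)) * (kappa ^ b * E powr (1/b)))"
    unfolding g_def h_def using ab x E kappa_pos
    by (intro mult_left_mono mult_mono sum_full_le sum_nonneg) auto
  finally show ?thesis by (simp add: mult_ac)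
qed

text \<open>Splitting the divisors \<open>e\<close> of \<open>n + 1\<close> at \<open>E = x\<^sup>1\<^sup>-\<^sup>1\<^sup>/\<^sup>a\<close> balances the two error
  terms: both become \<open>x\<^sup>1\<^sup>/\<^sup>a\<^sup>+\<^sup>1\<^sup>/\<^sup>b\<^sup>-\<^sup>1\<^sup>/\<^sup>(\<^sup>a\<^sup>b\<^sup>)\<close>.\<close>

lemma balanced_split_exponents:
  fixes x a b :: real
  assumes "x > 0" "a > 0" "b > 0"
  shows "x * (x powr (1 - 1/a)) powr (1/b - 1) = x powr (1/a + 1/b - 1/(a*b))"
    and "x powr (1/a) * (x powr (1 - 1/a)) powr (1/b) = x powr (1/a + 1/b - 1/(a*b))"
proof -
  have "1 + (1 - 1/a) * (1/b - 1) = 1/a + 1/b - 1/(a*b)"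
       "1/a + (1 - 1/a) * (1/b) = 1/a + 1/b - 1/(a*b)"
    using assms by (simp_all add: field_simps)
  then show "x * (x powr (1 - 1/a)) powr (1/b - 1) = x powr (1/a + 1/b - 1/(a*b))"
    and "x powr (1/a) * (x powr (1 - 1/a)) powr (1/b) = x powr (1/a + 1/b - 1/(a*b))"
    using assms by (simp_all add: powr_powr powr_mult_base powr_add[symmetric] add_diff_eq)
qed

lemma x_mult_c_tail_le:
  assumes ab: "2 \<le> a" "2 \<le> b" and x: "x \<ge> 1"
  shows "x * c_tail a b x (x powr (1 - 1/a))
           \<le> 12 * kappa ^ a * kappa ^ b * x powr (1/a + 1/b - 1/(real a * real b))"
proof -
  define \<rho> A B where "\<rho> = x powr (1/a + 1/b - 1/(real a * real b))" and "A = kappa ^ a" and "B = kappa ^ b"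
  have AB: "A \<ge> 1" "B \<ge> 1" using kappa_ge_1 by (simp_all add: A_def B_def)
  have \<rho>: "x powr (1/a) \<le> \<rho>" "\<rho> \<ge> 0"
    unfolding \<rho>_def using x ab by (auto intro!: powr_mono simp: field_simps)
  have "x * c_tail a b x (x powr (1 - 1/a))
      = 2 * A * (x * x powr (1/a - 1)) * (1 + 2 * B) + (1 + 2 * A) * (2 * B * (x * (x powr (1 - 1/a)) powr (1/b - 1)))"
    unfolding c_tail_def A_def B_def by (simp add: algebra_simps)
  also have "\<dots> = 2 * A * x powr (1/a) * (1 + 2 * B) + (1 + 2 * A) * (2 * B * \<rho>)"
    unfolding \<rho>_def using x ab by (simp add: powr_mult_base balanced_split_exponents)
  also have "\<dots> \<le> 2 * A * \<rho> * (3 * B) + (3 * A) * (2 * B * \<rho>)"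
    using AB \<rho> by (intro add_mono mult_mono mult_right_mono) auto
  finally show ?thesis by (simp add: \<rho>_def A_def B_def algebra_simps)
qed

lemma abs_Hcount_minus_c_le:
  assumes ab: "2 \<le> a" "a \<le> tet 2 k" "2 \<le> b" "b \<le> tet 2 m" and x: "x \<ge> 1"
  shows "\<bar>real (Hcount k m x) - c k m * x\<bar>
           \<le> 21 * kappa ^ a * kappa ^ b * x powr (1/a + 1/b - 1/(real a * real b))"
proof -
  define E \<rho> where "E = x powr (1 - 1/a)" and "\<rho> = x powr (1/a + 1/b - 1/(real a * real b))"
  let ?X = "nat \<lfloor>x\<rfloor>" and ?Y = "nat \<lfloor>E\<rfloor>"
  let ?T = "\<lambda>e. real_of_int (F m e) * sum_f_dvd_Suc k ?X e"
  have m: "m \<ge> 1" using ab one_le_if_two_le_tet by auto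
  have "1 \<le> E" unfolding E_def using x ab by (intro ge_one_powr_ge_zero) auto
  moreover have "E \<le> x powr 1" unfolding E_def using x ab by (intro powr_mono) auto
  ultimately have E: "1 \<le> E" "E \<le> x" using x by auto
  have "?Y \<le> ?X" using E by (intro nat_mono floor_mono)
  then have "{1..?X + 1} = {1..?Y} \<union> {?Y<..?X + 1}" by auto
  then have "real (Hcount k m x) = (\<Sum>e\<in>{1..?Y} \<union> {?Y<..?X + 1}. ?T e)"
    using Hcount_eq_sum_F_mult_sum_f[OF m, of x k] x by simp
  also have "\<dots> = (\<Sum>e\<in>{1..?Y}. ?T e) + (\<Sum>e\<in>{?Y<..?X + 1}. ?T e)"
    by (rule sum.union_disjoint) auto
  finally have "real (Hcount k m x) = (\<Sum>e\<in>{1..?Y}. ?T e) + (\<Sum>e\<in>{?Y<..?X + 1}. ?T e)" .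
  moreover have "\<bar>\<Sum>e\<in>{?Y<..?X + 1}. ?T e\<bar> \<le> 6 * kappa ^ b * \<rho>"
    using large_divisors_bound[OF ab(3,4) x E] balanced_split_exponents(1)[of x a b] x ab
    by (simp add: E_def \<rho>_def)
  moreover have "\<bar>(\<Sum>e\<in>{1..?Y}. ?T e) - x * c_partial k m ?X ?Y\<bar> \<le> 3 * kappa ^ a * kappa ^ b * \<rho>"
    using small_divisors_bound[OF ab x E(1)] balanced_split_exponents(2)[of x a b] x ab
    by (simp add: E_def \<rho>_def)
  moreover have "\<bar>x * c_partial k m ?X ?Y - c k m * x\<bar> \<le> 12 * kappa ^ a * kappa ^ b * \<rho>"
  proof -
    have "\<bar>x * c_partial k m ?X ?Y - c k m * x\<bar> = x * \<bar>c k m - c_partial k m ?X ?Y\<bar>"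
      using x by (simp add: abs_mult_pos' algebra_simps flip: abs_minus_commute)
    also have "\<dots> \<le> x * c_tail a b x E"
      using x E by (intro mult_left_mono abs_c_minus_c_partial_le[OF ab]) auto
    also have "\<dots> \<le> 12 * kappa ^ a * kappa ^ b * \<rho>"
      unfolding E_def \<rho>_def using ab x by (intro x_mult_c_tail_le) auto
    finally show ?thesis .
  qed
  moreover have "kappa ^ b * \<rho> \<le> kappa ^ a * kappa ^ b * \<rho>"
    using kappa_ge_1 by (intro mult_right_mono) (auto simp: \<rho>_def)
  ultimately show ?thesis unfolding \<rho>_def by linarith
qed

lemma one_le_mult_ln_squared:
  fixes \<alpha> \<beta> x :: real
  assumes "2 \<le> \<alpha>" "2 \<le> \<beta>" "2 \<le> x"
  shows "1 \<le> \<alpha> * \<beta> * (ln x)\<^sup>2"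
proof -
  have "2/3 \<le> ln x" using ln2_ge_two_thirds ln_le_cancel_iff[of 2 x] assms(3) by linarith
  then have "(2/3)\<^sup>2 \<le> (ln x)\<^sup>2" by (intro power_mono) auto
  moreover have "4 \<le> \<alpha> * \<beta>" using mult_mono[OF assms(1,2)] assms by simp
  ultimately have "4 * (2/3)\<^sup>2 \<le> \<alpha> * \<beta> * (ln x)\<^sup>2" by (intro mult_mono) auto
  then show ?thesis by (simp add: power2_eq_square)
qed

theorem lemma8:
  "\<exists>C::real. \<forall>k m k0 m0. \<forall>x::real.
     1 \<le> k0 \<and> k0 \<le> k \<and> 1 \<le> m0 \<and> m0 \<le> m \<and> x \<ge> 2 \<longrightarrow>
     (let \<alpha> = real (tet 2 k0); \<beta> = real (tet 2 m0) in
       \<bar>real (Hcount k m x) - c k m * x\<bar>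
         \<le> C * (\<alpha> * \<beta> * kappa powr (\<alpha> + \<beta>) * x powr (1/\<alpha> + 1/\<beta> - 1/(\<alpha>*\<beta>)) * (ln x)\<^sup>2))"
proof (intro exI[of _ 21] allI impI)
  fix k m k0 m0 :: nat and x :: real
  assume h: "1 \<le> k0 \<and> k0 \<le> k \<and> 1 \<le> m0 \<and> m0 \<le> m \<and> x \<ge> 2"
  define a b where "a = tet 2 k0" and "b = tet 2 m0"
  define \<rho> where "\<rho> = kappa ^ a * kappa ^ b * x powr (1/a + 1/b - 1/(real a * real b))"
  have ab: "2 \<le> a" "a \<le> tet 2 k" "2 \<le> b" "b \<le> tet 2 m"
    using h tet_2_ge_2 tet_2_mono by (auto simp: a_def b_def)
  have "\<bar>real (Hcount k m x) - c k m * x\<bar> \<le> 21 * \<rho>"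
    using abs_Hcount_minus_c_le[OF ab, of x] h by (simp add: \<rho>_def mult.assoc)
  also have "\<dots> \<le> 21 * (real a * real b * (ln x)\<^sup>2 * \<rho>)"
  proof -
    have "\<rho> \<ge> 0" using kappa_pos by (simp add: \<rho>_def)
    then have "1 * \<rho> \<le> real a * real b * (ln x)\<^sup>2 * \<rho>"
      using one_le_mult_ln_squared[of a b x] ab h by (intro mult_right_mono) auto
    then show ?thesis by simp
  qed
  finally show "let \<alpha> = real (tet 2 k0); \<beta> = real (tet 2 m0) in
       \<bar>real (Hcount k m x) - c k m * x\<bar>
         \<le> 21 * (\<alpha> * \<beta> * kappa powr (\<alpha> + \<beta>) * x powr (1/\<alpha> + 1/\<beta> - 1/(\<alpha>*\<beta>)) * (ln x)\<^sup>2)"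
    using kappa_pos by (simp add: Let_def a_def b_def \<rho>_def powr_add powr_realpow mult_ac)
qed

end
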